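(* Let $n\in\mathbb N$ and let $\hat A\in\mathrm{Extr}(\mathcal A^n_+)$ with $\langle n|\hat A|n\rangle>0$. Then there exists $t_0>0$ such that for all $t\ge t_0$, $\mathcal V^{\mathrm{norm}}_t[\hat A]\in\mathrm{Extr}(\mathcal D^n_+)$ and $\mathcal V^{\mathrm{norm}}_t[\hat A]\in\mathrm{Extr}(\mathcal D_+)$.
   Context: Let $\mathcal H=L^2(\mathbb R)$ with annihilation operator $\hat a$, number operator $\hat n=\hat a^\dagger\hat a$, Fock basis $\{|k\rangle\}$, $\hat D(\alpha)=\exp(\alpha\hat a^\dagger-\alpha^*\hat a)$, $\hat\Pi(\alpha)=\hat D(\alpha)(-1)^{\hat n}\hat D(\alpha)^\dagger$. The Wigner function of a trace-class $\hat A$ is $W_{\hat A}(\alpha)=\frac{2}{\pi}\mathrm{Tr}[\hat A\hat\Pi(\alpha)]$. A quasi-state is a Hermitian trace-class unit-trace operator; a state is a positive semi-definite quasi-state. With $\hat P_n=\sum_{k=0}^n|k\rangle\langle k|$: $\mathcal A^n_+$ is the set of quasi-states $\hat A$ with $\hat P_n\hat A\hat P_n=\hat A$ and $W_{\hat A}\ge0$ everywhere; $\mathcal D_+$ is the set of states with non-negative Wigner function; $\mathcal D^n_+=\mathcal D_+\cap\{\hat\rho:\hat P_n\hat\rho\hat P_n=\hat\rho\}$. $\mathrm{Extr}(\mathcal C)$ denotes the set of extreme points of a convex set $\mathcal C$. For $t>0$ and a trace-class operator $\hat A$ with $\hat P_N\hat A\hat P_N=\hat A$ for some $N$, the Vertigo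 map is $\mathcal V_t[\hat A]=\sum_{k\ge0}\frac{(t-1)^k}{k!}\,t^{\hat n/2}\hat a^k\hat A\hat a^{\dagger k}t^{\hat n/2}$ (a finite sum), equivalently characterized by $W_{\mathcal V_t[\hat A]}(\alpha)=W_{\hat A}(\sqrt t\,\alpha)\,e^{2(t-1)|\alpha|^2}$; and $\mathcal V^{\mathrm{norm}}_t[\hat A]=\mathcal V_t[\hat A]/\mathrm{Tr}\,\mathcal V_t[\hat A]$ whenever this trace is non-zero. *)

theory Defs
  imports Complex_Main
begin

text \<open>Operators on L2(R) are represented by their matrices in the Fock basis:
  an operator X corresponds to the function (\<lambda>i j. \<langle>i|X|j\<rangle>).\<close>

type_synonym fmat = "nat \<Rightarrow> nat \<Rightarrow> complex"

text \<open>Matrix elements of the displacement operator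
  D(b) = exp(b a^dagger - conj b a) = exp(-|b|^2/2) exp(b a^dagger) exp(-conj b a).\<close>
definition disp :: "complex \<Rightarrow> fmat" where
  "disp b m n = complex_of_real (exp (- (cmod b ^ 2) / 2)) *
     (\<Sum>k\<le>min m n. complex_of_real (sqrt (fact m * fact n) /
          (fact k * fact (m - k) * fact (n - k))) * b ^ (m - k) * (- cnj b) ^ (n - k))"

text \<open>Displaced parity Pi(a) = D(a) (-1)^n D(a)^dagger, matrix element \<langle>k|Pi(a)|j\<rangle>.\<close>
definition parity :: "complex \<Rightarrow> fmat" where
  "parity a k j = (\<Sum>l. disp a k l * (-1) ^ l * cnj (disp a j l))"

text \<open>Wigner function W_A(a) = (2/pi) Tr[A Pi(a)], Tr[A Pi] = \<Sum>_j \<Sum>_k A_jk Pi_kj.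
  (Real part taken: the value is real for Hermitian A.)\<close>
definition wigner :: "fmat \<Rightarrow> complex \<Rightarrow> real" where
  "wigner A a = 2 / pi * Re (\<Sum>j. \<Sum>k. A j k * parity a k j)"

definition hermitian :: "fmat \<Rightarrow> bool" where
  "hermitian A \<longleftrightarrow> (\<forall>i j. A j i = cnj (A i j))"

text \<open>P_n A P_n = A\<close>
definition supp_le :: "nat \<Rightarrow> fmat \<Rightarrow> bool" where
  "supp_le n A \<longleftrightarrow> (\<forall>i j. n < i \<or> n < j \<longrightarrow> A i j = 0)"

text \<open>Quasi-state with P_n A P_n = A (trace class automatically, being finite rank).\<close>
definition qstate_supp :: "nat \<Rightarrow> fmat \<Rightarrow> bool" where
  "qstate_supp n A \<longleftrightarrow> supp_le n A \<and> hermitian A \<and> (\<Sum>i\<le>n. A i i) = 1"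

text \<open>A Hermitian matrix
  that is positive semidefinite on finitely supported vectors and has summable diagonal
  is exactly the matrix of a positive trace-class operator.\<close>
definition is_state :: "fmat \<Rightarrow> bool" where
  "is_state \<rho> \<longleftrightarrow> hermitian \<rho> \<and>
     (\<forall>N (v::nat \<Rightarrow> complex). 0 \<le> Re (\<Sum>i\<le>N. \<Sum>j\<le>N. cnj (v i) * \<rho> i j * v j)) \<and>
     (\<lambda>i. \<rho> i i) sums 1"

definition A_plus :: "nat \<Rightarrow> fmat set" where
  "A_plus n = {A. qstate_supp n A \<and> (\<forall>a. 0 \<le> wigner A a)}"

definition D_plus :: "fmat set" where
  "D_plus = {\<rho>. is_state \<rho> \<and> (\<forall>a. 0 \<le> wigner \<rho> a)}"

definition D_plus_n :: "nat \<Rightarrow> fmat set" where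
  "D_plus_n n = D_plus \<inter> {\<rho>. supp_le n \<rho>}"

definition extr :: "fmat set \<Rightarrow> fmat set" where
  "extr C = {x \<in> C. \<forall>y z (l::real). y \<in> C \<longrightarrow> z \<in> C \<longrightarrow> 0 < l \<longrightarrow> l < 1 \<longrightarrow>
      x = (\<lambda>i j. complex_of_real l * y i j + complex_of_real (1 - l) * z i j) \<longrightarrow> y = z}"

text \<open>Vertigo map: V_t[A] = \<Sum>_k (t-1)^k/k! t^(n/2) a^k A a^dagger^k t^(n/2), written out in
  the Fock basis using a^dagger^k|j\<rangle> = sqrt((j+k)!/j!) |j+k\<rangle>.\<close>
definition vertigo :: "real \<Rightarrow> fmat \<Rightarrow> fmat" where
  "vertigo t A i j = (\<Sum>k. complex_of_real ((t - 1) ^ k / fact k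
       * t powr (real i / 2) * t powr (real j / 2)
       * sqrt (fact (i + k) / fact i) * sqrt (fact (j + k) / fact j)) * A (i + k) (j + k))"

definition mtrace :: "fmat \<Rightarrow> complex" where
  "mtrace A = (\<Sum>i. A i i)"

definition vertigo_norm :: "real \<Rightarrow> fmat \<Rightarrow> fmat" where
  "vertigo_norm t A = (\<lambda>i j. vertigo t A i j / mtrace (vertigo t A))"

end

theory Submission
  imports Defs
begin

text \<open>The Vertigo map multiplies the rescaled Wigner function \<open>W(\<surd>t \<alpha>)\<close> by the Gaussian
  factor \<open>exp (2 (t - 1) |\<alpha>|\<^sup>2)\<close>; in the Fock basis this follows from the closed form
  \<open>\<Pi>(\<alpha>) = D(2\<alpha>) (-1)\<^sup>n\<close> of the displaced parity. Hence \<open>V\<^sub>t\<close> and its inverse \<open>V\<^sub>1\<^sub>/\<^sub>t\<close> (the \<open>V\<^sub>t\<close> form a group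
  on matrices supported in \<open>{0..n}\<close>) both preserve non-negativity of the Wigner function.

  For large \<open>t\<close> the entry \<open>A\<^sub>n\<^sub>n > 0\<close> takes over: the diagonal of \<open>V\<^sub>t[A]\<close> grows like
  \<open>t\<^sup>n\<close>, every other contribution is \<open>O(t\<^sup>n / \<surd>t)\<close>, so \<open>V\<^sub>t[A]\<close> is diagonally dominant and
  its normalisation \<open>\<rho>\<close> is a state with non-negative Wigner function.

  If \<open>\<rho> = l y + (1 - l) z\<close> with \<open>y, z \<in> D\<^sub>+\<close>, positivity forces \<open>y\<close> and \<open>z\<close> to be
  supported in \<open>{0..n}\<close>. Applying \<open>V\<^sub>1\<^sub>/\<^sub>t\<close> writes \<open>A\<close> as a sum of two matrices with
  non-negative Wigner functions; extremality of \<open>A\<close> in \<open>A\<^sup>n\<^sub>+\<close> makes both multiples of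
  \<open>A\<close>, and applying \<open>V\<^sub>t\<close> again gives \<open>y = z = \<rho>\<close>. Extremality in the smaller set
  \<open>D\<^sup>n\<^sub>+\<close> follows.\<close>

subsection \<open>Displacement and parity matrix elements\<close>

definition disp_poly :: "complex \<Rightarrow> nat \<Rightarrow> nat \<Rightarrow> complex" where
  "disp_poly b m n = (\<Sum>k\<le>min m n. b ^ (m - k) * (- cnj b) ^ (n - k) / (fact k * fact (m - k) * fact (n - k)))"

lemma disp_eq_disp_poly:
  "disp b m n = of_real (exp (- (cmod b ^ 2) / 2) * sqrt (fact m * fact n)) * disp_poly b m n"
  unfolding disp_def disp_poly_def sum_distrib_left
  by (rule sum.cong) (auto simp: of_real_mult)

lemma disp_poly_uminus: "disp_poly (- b) m n = (-1) ^ (m + n) * disp_poly b m n"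
  unfolding disp_poly_def sum_distrib_left
proof (rule sum.cong[OF refl])
  fix k assume "k \<in> {..min m n}"
  then have "m + n = (m - k) + (n - k) + 2 * k" by auto
  then have "(-1::complex) ^ (m + n) = (-1) ^ (m - k) * (-1) ^ (n - k) * ((-1) ^ 2) ^ k"
    by (simp only: power_add power_mult)
  then have sign: "(-1::complex) ^ (m + n) = (-1) ^ (m - k) * (-1) ^ (n - k)"
    by simp
  have "(- b) ^ (m - k) = (-1) ^ (m - k) * b ^ (m - k)"
    and "(- cnj (- b)) ^ (n - k) = (-1) ^ (n - k) * (- cnj b) ^ (n - k)"
    by (simp_all only: power_minus[symmetric] complex_cnj_minus minus_minus)
  then show "(- b) ^ (m - k) * (- cnj (- b)) ^ (n - k) / (fact k * fact (m - k) * fact (n - k)) =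
      (-1) ^ (m + n) * (b ^ (m - k) * (- cnj b) ^ (n - k) / (fact k * fact (m - k) * fact (n - k)))"
    unfolding sign by (simp add: mult_ac)
qed

lemma cnj_disp_poly: "cnj (disp_poly b m n) = disp_poly (- b) n m"
  unfolding disp_poly_def cnj_sum
  by (rule sum.cong) (auto simp: min.commute mult_ac)

lemma vandermonde_fact:
  assumes "max p q \<le> (l::nat)"
  shows "(\<Sum>r | r \<le> min p q \<and> p + q \<le> l + r.
            fact p * fact q / (fact r * fact (p - r) * fact (q - r) * fact (l + r - p - q)) :: real)
    = fact l / (fact (l - p) * fact (l - q))"
proof -
  let ?R = "{r. r \<le> min p q \<and> p + q \<le> l + r}"
  have "real (l choose q) = (\<Sum>k\<le>q. real (p choose k) * real ((l - p) choose (q - k)))"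
    using vandermonde[of p "l - p" q] assms by (simp flip: of_nat_mult of_nat_sum)
  also have "\<dots> = (\<Sum>k\<in>?R. real (p choose k) * real ((l - p) choose (q - k)))"
    using assms by (intro sum.mono_neutral_right) auto
  also have "\<dots> = (\<Sum>k\<in>?R. fact p * fact q / (fact k * fact (p - k) * fact (q - k) * fact (l + k - p - q))
                      * (fact (l - p) / fact q))"
  proof (rule sum.cong[OF refl])
    fix k assume k: "k \<in> ?R"
    then have "q - k \<le> l - p" "l - (p + (q - k)) = k + l - (p + q)" using assms by auto
    with k show "real (p choose k) * real ((l - p) choose (q - k)) =
        fact p * fact q / (fact k * fact (p - k) * fact (q - k) * fact (l + k - p - q)) * (fact (l - p) / fact q)"
      by (simp add: binomial_fact field_simps)
  qed
  finally have "real (l choose q) = (\<Sum>k\<in>?R. fact p * fact q /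
      (fact k * fact (p - k) * fact (q - k) * fact (l + k - p - q))) * (fact (l - p) / fact q)"
    by (simp only: sum_distrib_right)
  moreover have "real (l choose q) = fact l / (fact q * fact (l - q))"
    using assms by (simp add: binomial_fact)
  ultimately show ?thesis by (simp add: field_simps)
qed

text \<open>Both sides are \<open>\<surd>(p! q!)\<close> times the Fock matrix element
  \<open>\<langle>q| e\<^sup>y\<^sup>a e\<^sup>x\<^sup>a\<^sup>\<dagger> |p\<rangle>\<close>: on the left expanded over the intermediate states \<open>|l\<rangle>\<close>,
  on the right after normal ordering \<open>e\<^sup>y\<^sup>a e\<^sup>x\<^sup>a\<^sup>\<dagger> = e\<^sup>x\<^sup>y e\<^sup>x\<^sup>a\<^sup>\<dagger> e\<^sup>y\<^sup>a\<close>.\<close>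

lemma reorder_exp_sums:
  fixes x y :: complex
  shows "(\<lambda>l. if max p q \<le> l then of_real (fact l / (fact (l - p) * fact (l - q))) * x ^ (l - p) * y ^ (l - q) else 0)
    sums (exp (x * y) * (\<Sum>r\<le>min p q. of_real (fact p * fact q / (fact r * fact (p - r) * fact (q - r)))
                                        * y ^ (p - r) * x ^ (q - r)))"
proof -
  define c where "c r = (fact p * fact q / (fact r * fact (p - r) * fact (q - r)) :: real)" for r
  define g where "g r l = (if p + q - r \<le> l then of_real (c r / fact (l - (p + q - r)))
      * y ^ (p - r) * x ^ (q - r) * (x * y) ^ (l - (p + q - r)) else (0::complex))" for r l
  have g_sums: "g r sums (of_real (c r) * y ^ (p - r) * x ^ (q - r) * exp (x * y))" for r
  proof -
    have "(\<lambda>s. g r (s + (p + q - r))) = (\<lambda>s. of_real (c r) * y ^ (p - r) * x ^ (q - r) * ((x * y) ^ s /\<^sub>R fact s))"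
      by (auto simp: g_def scaleR_conv_of_real divide_inverse mult_ac)
    then have "(\<lambda>s. g r (s + (p + q - r))) sums (of_real (c r) * y ^ (p - r) * x ^ (q - r) * exp (x * y))"
      using sums_mult[OF exp_converges] by simp
    moreover have "\<And>i. i < p + q - r \<Longrightarrow> g r i = 0" by (simp add: g_def)
    ultimately show ?thesis using sums_zero_iff_shift[of "p + q - r" "g r"] by simp
  qed
  have g_total: "(\<Sum>r\<le>min p q. g r l) = (if max p q \<le> l then
      of_real (fact l / (fact (l - p) * fact (l - q))) * x ^ (l - p) * y ^ (l - q) else 0)" for l
  proof (cases "max p q \<le> l")
    case True
    let ?R = "{r. r \<le> min p q \<and> p + q \<le> l + r}"
    have "(\<Sum>r\<le>min p q. g r l) = (\<Sum>r\<in>?R. g r l)"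
      by (rule sum.mono_neutral_right) (auto simp: g_def)
    also have "\<dots> = (\<Sum>r\<in>?R. of_real (c r / fact (l + r - p - q)) * (x ^ (l - p) * y ^ (l - q)))"
    proof (rule sum.cong[OF refl])
      fix r assume r: "r \<in> ?R"
      have "l - (p + q - r) = l + r - p - q" using r by auto
      moreover have "x ^ (l - p) = x ^ (q - r) * x ^ (l + r - p - q)"
        "y ^ (l - q) = y ^ (p - r) * y ^ (l + r - p - q)"
        using r True by (simp_all flip: power_add)
      ultimately show "g r l = of_real (c r / fact (l + r - p - q)) * (x ^ (l - p) * y ^ (l - q))"
        using r by (simp add: g_def power_mult_distrib mult_ac le_diff_conv)
    qed
    also have "\<dots> = of_real (\<Sum>r\<in>?R. c r / fact (l + r - p - q)) * (x ^ (l - p) * y ^ (l - q))"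
      by (simp add: sum_distrib_right)
    also have "(\<Sum>r\<in>?R. c r / fact (l + r - p - q)) = fact l / (fact (l - p) * fact (l - q))"
      using vandermonde_fact[OF True] by (simp add: c_def)
    finally show ?thesis using True by (simp add: mult_ac)
  qed (auto intro!: sum.neutral simp: g_def)
  have "(\<lambda>l. \<Sum>r\<le>min p q. g r l) sums (\<Sum>r\<le>min p q. of_real (c r) * y ^ (p - r) * x ^ (q - r) * exp (x * y))"
    by (rule sums_sum) (rule g_sums)
  then show ?thesis
    unfolding g_total by (simp add: sum_distrib_left c_def mult_ac)
qed

lemma sum_inverse_fact_products:
  assumes "r \<le> (k::nat)"
  shows "(\<Sum>m\<le>k. if r \<le> m then 1 / (fact (k - m) * fact (m - r)) else 0) = (2 ^ (k - r) / fact (k - r) :: complex)"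
proof -
  have "(\<Sum>m\<le>k. if r \<le> m then 1 / (fact (k - m) * fact (m - r)) else 0)
      = (\<Sum>m\<in>{r..k}. 1 / (fact (k - m) * fact (m - r)) :: complex)"
    by (rule sum.mono_neutral_cong_right) auto
  also have "\<dots> = (\<Sum>i\<in>{0..k - r}. 1 / (fact (k - (i + r)) * fact (i + r - r)))"
    using sum.shift_bounds_cl_nat_ivl[of "\<lambda>m. 1 / (fact (k - m) * fact (m - r)) :: complex" 0 r "k - r"] assms
    by simp
  also have "\<dots> = (\<Sum>i\<le>k - r. of_nat ((k - r) choose i) / fact (k - r))"
    by (rule sum.cong) (auto simp: binomial_fact field_simps)
  also have "\<dots> = 2 ^ (k - r) / fact (k - r)"
    by (simp add: choose_row_sum flip: of_nat_sum sum_divide_distrib)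
  finally show ?thesis .
qed

lemma nested_sum_collapse:
  fixes c x :: complex
  shows "(\<Sum>m\<le>k. \<Sum>m'\<le>j. (c ^ (k - m) / (fact m * fact (k - m))) * (x ^ (j - m') / (fact m' * fact (j - m'))) *
      (\<Sum>r\<le>min m m'. of_real (fact m * fact m' / (fact r * fact (m - r) * fact (m' - r))) * c ^ (m - r) * x ^ (m' - r)))
    = (\<Sum>r\<le>min k j. (2 * c) ^ (k - r) * x ^ (j - r) * 2 ^ (j - r) / (fact r * fact (k - r) * fact (j - r)))"
proof -
  define u where "u r m = (if r \<le> m then 1 / (fact (k - m) * fact (m - r)) else 0 :: complex)" for r m
  define w where "w r m' = (if r \<le> m' then 1 / (fact (j - m') * fact (m' - r)) else 0 :: complex)" for r m'
  define H where "H r = c ^ (k - r) * x ^ (j - r) / fact r" for r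
  have "(\<Sum>m\<le>k. \<Sum>m'\<le>j. (c ^ (k - m) / (fact m * fact (k - m))) * (x ^ (j - m') / (fact m' * fact (j - m'))) *
      (\<Sum>r\<le>min m m'. of_real (fact m * fact m' / (fact r * fact (m - r) * fact (m' - r))) * c ^ (m - r) * x ^ (m' - r)))
    = (\<Sum>m\<le>k. \<Sum>m'\<le>j. \<Sum>r\<le>min k j. H r * u r m * w r m')"
  proof (intro sum.cong refl)
    fix m m' assume m: "m \<in> {..k}" and m': "m' \<in> {..j}"
    have "(c ^ (k - m) / (fact m * fact (k - m))) * (x ^ (j - m') / (fact m' * fact (j - m'))) *
      (\<Sum>r\<le>min m m'. of_real (fact m * fact m' / (fact r * fact (m - r) * fact (m' - r))) * c ^ (m - r) * x ^ (m' - r))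
      = (\<Sum>r\<le>min m m'. H r * u r m * w r m')"
      unfolding sum_distrib_left
    proof (rule sum.cong[OF refl])
      fix r assume r: "r \<in> {..min m m'}"
      have "c ^ (k - r) = c ^ (k - m) * c ^ (m - r)" "x ^ (j - r) = x ^ (j - m') * x ^ (m' - r)"
        using r m m' by (simp_all flip: power_add)
      then show "(c ^ (k - m) / (fact m * fact (k - m))) * (x ^ (j - m') / (fact m' * fact (j - m'))) *
          (of_real (fact m * fact m' / (fact r * fact (m - r) * fact (m' - r))) * c ^ (m - r) * x ^ (m' - r))
          = H r * u r m * w r m'"
        using r by (simp add: H_def u_def w_def field_simps)
    qed
    also have "\<dots> = (\<Sum>r\<le>min k j. H r * u r m * w r m')"
      using m m' by (intro sum.mono_neutral_left) (auto simp: u_def w_def)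
    finally show "(c ^ (k - m) / (fact m * fact (k - m))) * (x ^ (j - m') / (fact m' * fact (j - m'))) *
      (\<Sum>r\<le>min m m'. of_real (fact m * fact m' / (fact r * fact (m - r) * fact (m' - r))) * c ^ (m - r) * x ^ (m' - r))
      = (\<Sum>r\<le>min k j. H r * u r m * w r m')" .
  qed
  also have "\<dots> = (\<Sum>r\<le>min k j. \<Sum>m\<le>k. \<Sum>m'\<le>j. H r * u r m * w r m')"
    by (simp add: sum.swap[of _ "{..min k j}"])
  also have "\<dots> = (\<Sum>r\<le>min k j. H r * ((\<Sum>m\<le>k. u r m) * (\<Sum>m'\<le>j. w r m')))"
    by (simp only: sum_product) (simp add: sum_distrib_left mult.assoc)
  also have "\<dots> = (\<Sum>r\<le>min k j. (2 * c) ^ (k - r) * x ^ (j - r) * 2 ^ (j - r) / (fact r * fact (k - r) * fact (j - r)))"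
    unfolding u_def w_def
    by (intro sum.cong refl) (simp add: sum_inverse_fact_products H_def power_mult_distrib field_simps)
  finally show ?thesis .
qed

lemma disp_poly_row_sum:
  "disp_poly c k l = (\<Sum>m\<le>k. if m \<le> l then c ^ (k - m) / (fact m * fact (k - m)) * ((- cnj c) ^ (l - m) / fact (l - m)) else 0)"
proof -
  have "{..min k l} = {m\<in>{..k}. m \<le> l}" by auto
  then show ?thesis
    unfolding disp_poly_def sum.inter_filter[OF finite_atMost, symmetric] by (simp add: field_simps)
qed

lemma disp_poly_col_sum:
  "disp_poly c l j = (\<Sum>m\<le>j. if m \<le> l then (- cnj c) ^ (j - m) / (fact m * fact (j - m)) * (c ^ (l - m) / fact (l - m)) else 0)"
proof -
  have "{..min l j} = {m\<in>{..j}. m \<le> l}" by auto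
  then show ?thesis
    unfolding disp_poly_def sum.inter_filter[OF finite_atMost, symmetric] by (simp add: field_simps)
qed

text \<open>The identity \<open>D(c) D(c) = D(2c)\<close>, written in the Fock basis.\<close>

lemma sums_disp_poly_square:
  "(\<lambda>l. fact l * disp_poly c k l * disp_poly c l j) sums (of_real (exp (- (cmod c ^ 2))) * disp_poly (2 * c) k j)"
proof -
  define x where "x = - cnj c"
  define \<alpha> where "\<alpha> m = c ^ (k - m) / (fact m * fact (k - m))" for m
  define \<beta> where "\<beta> m' = x ^ (j - m') / (fact m' * fact (j - m'))" for m'
  define T where "T m m' l = (if max m m' \<le> l then of_real (fact l / (fact (l - m) * fact (l - m')))
                               * x ^ (l - m) * c ^ (l - m') else 0)" for m m' l
  define S where "S m m' = (\<Sum>r\<le>min m m'. of_real (fact m * fact m' / (fact r * fact (m - r) * fact (m' - r)))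
                               * c ^ (m - r) * x ^ (m' - r))" for m m'
  have expand: "fact l * disp_poly c k l * disp_poly c l j = (\<Sum>m\<le>k. \<Sum>m'\<le>j. \<alpha> m * \<beta> m' * T m m' l)" for l
  proof -
    have "fact l * disp_poly c k l * disp_poly c l j
        = fact l * ((\<Sum>m\<le>k. if m \<le> l then \<alpha> m * (x ^ (l - m) / fact (l - m)) else 0) *
                    (\<Sum>m'\<le>j. if m' \<le> l then \<beta> m' * (c ^ (l - m') / fact (l - m')) else 0))"
      unfolding disp_poly_row_sum[of c k l] disp_poly_col_sum[of c l j] \<alpha>_def \<beta>_def x_def by simp
    also have "\<dots> = (\<Sum>m\<le>k. \<Sum>m'\<le>j. fact l * ((if m \<le> l then \<alpha> m * (x ^ (l - m) / fact (l - m)) else 0) *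
                    (if m' \<le> l then \<beta> m' * (c ^ (l - m') / fact (l - m')) else 0)))"
      by (subst sum_product) (simp only: sum_distrib_left)
    also have "\<dots> = (\<Sum>m\<le>k. \<Sum>m'\<le>j. \<alpha> m * \<beta> m' * T m m' l)"
      by (intro sum.cong refl) (simp add: T_def)
    finally show ?thesis .
  qed
  have "(\<lambda>l. \<Sum>m\<le>k. \<Sum>m'\<le>j. \<alpha> m * \<beta> m' * T m m' l) sums (\<Sum>m\<le>k. \<Sum>m'\<le>j. \<alpha> m * \<beta> m' * (exp (x * c) * S m m'))"
    using reorder_exp_sums[of _ _ x c] unfolding T_def S_def by (intro sums_sum sums_mult) simp
  also have "(\<Sum>m\<le>k. \<Sum>m'\<le>j. \<alpha> m * \<beta> m' * (exp (x * c) * S m m'))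
      = exp (x * c) * (\<Sum>m\<le>k. \<Sum>m'\<le>j. \<alpha> m * \<beta> m' * S m m')"
    by (simp add: sum_distrib_left mult_ac)
  also have "(\<Sum>m\<le>k. \<Sum>m'\<le>j. \<alpha> m * \<beta> m' * S m m') = disp_poly (2 * c) k j"
  proof -
    have "(- (cnj c * 2)) ^ i = (- cnj c) ^ i * (2::complex) ^ i" for i
      by (metis mult_minus_left power_mult_distrib)
    then show ?thesis
      unfolding \<alpha>_def \<beta>_def S_def nested_sum_collapse disp_poly_def x_def
      by (intro sum.cong refl) (simp add: power_mult_distrib field_simps)
  qed
  also have "exp (x * c) = of_real (exp (- (cmod c ^ 2)))"
    using complex_norm_square[of c] by (simp add: x_def mult.commute flip: exp_of_real)
  finally show ?thesis by (simp add: expand)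
qed

text \<open>The closed form \<open>\<Pi>(a) = D(2a) (-1)\<^sup>n\<close>; by \<open>disp_poly_uminus\<close> its entry
  \<open>(-1)\<^sup>j \<langle>k|D(2a)|j\<rangle>\<close> equals \<open>(-1)\<^sup>k \<langle>k|D(-2a)|j\<rangle>\<close>.\<close>

lemma parity_eq_disp: "parity a k j = (-1) ^ k * disp (-2 * a) k j"
proof -
  define E where "E = exp (- (cmod a ^ 2) / 2)"
  have "(\<lambda>l. of_real (E * E * sqrt (fact k * fact j)) * (-1) ^ k * (fact l * disp_poly (-a) k l * disp_poly (-a) l j))
      sums (of_real (E * E * sqrt (fact k * fact j)) * (-1) ^ k * (of_real (exp (- (cmod a ^ 2))) * disp_poly (-2 * a) k j))"
    using sums_mult[OF sums_disp_poly_square[of "-a" k j]] by simp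
  moreover have "of_real (E * E * sqrt (fact k * fact j)) * (-1) ^ k * (fact l * disp_poly (-a) k l * disp_poly (-a) l j)
      = disp a k l * (-1) ^ l * cnj (disp a j l)" for l
  proof -
    have sign: "(-1::complex) ^ l * disp_poly a k l = (-1) ^ k * disp_poly (-a) k l"
      by (simp add: disp_poly_uminus power_add)
    have "disp a k l * (-1) ^ l * cnj (disp a j l) = of_real (E * sqrt (fact k * fact l)) *
        of_real (E * sqrt (fact j * fact l)) * ((-1) ^ l * disp_poly a k l) * cnj (disp_poly a j l)"
      unfolding disp_eq_disp_poly E_def by (simp add: mult_ac)
    also have "\<dots> = of_real (E * sqrt (fact k * fact l) * (E * sqrt (fact j * fact l))) *
        ((-1) ^ k * disp_poly (-a) k l) * disp_poly (-a) l j"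
      by (simp only: sign cnj_disp_poly of_real_mult)
    also have "E * sqrt (fact k * fact l) * (E * sqrt (fact j * fact l)) = E * E * sqrt (fact k * fact j) * fact l"
      by (simp add: real_sqrt_mult mult_ac)
    finally show ?thesis by (simp add: mult_ac)
  qed
  moreover have "E * E * exp (- (cmod a ^ 2)) = exp (- (cmod (-2 * a) ^ 2) / 2)"
    unfolding E_def by (simp add: norm_mult power_mult_distrib flip: exp_add)
  ultimately show ?thesis
    unfolding parity_def disp_eq_disp_poly by (simp add: sums_iff mult_ac flip: of_real_mult)
qed

definition parity_disp_trace :: "nat \<Rightarrow> fmat \<Rightarrow> complex \<Rightarrow> complex" where
  "parity_disp_trace n X b = (\<Sum>j\<le>n. \<Sum>k\<le>n. X j k * (-1) ^ k * disp b k j)"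

lemma supp_leD: "supp_le n X \<Longrightarrow> n < i \<or> n < j \<Longrightarrow> X i j = 0"
  unfolding supp_le_def by blast

lemma wigner_eq_parity_disp_trace:
  assumes "supp_le n X"
  shows "wigner X a = 2 / pi * Re (parity_disp_trace n X (-2 * a))"
proof -
  have "(\<Sum>k. X j k * parity a k j) = (\<Sum>k\<le>n. X j k * (-1) ^ k * disp (-2 * a) k j)" for j
    by (subst suminf_finite[of "{..n}"]) (auto simp: supp_leD[OF assms] parity_eq_disp mult_ac)
  then have "(\<Sum>j. \<Sum>k. X j k * parity a k j) = (\<Sum>j\<le>n. \<Sum>k\<le>n. X j k * (-1) ^ k * disp (-2 * a) k j)"
    by (subst suminf_finite[of "{..n}"]) (auto simp: supp_leD[OF assms])
  then show ?thesis unfolding wigner_def parity_disp_trace_def by simp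
qed

subsection \<open>The Vertigo map\<close>

definition vertigo_coeff :: "real \<Rightarrow> nat \<Rightarrow> nat \<Rightarrow> nat \<Rightarrow> real" where
  "vertigo_coeff t i j k = (t - 1) ^ k / fact k * t powr (real i / 2) * t powr (real j / 2)
       * sqrt (fact (i + k) / fact i) * sqrt (fact (j + k) / fact j)"

lemma vertigo_eq_sum:
  assumes "supp_le n X"
  shows "vertigo t X i j = (\<Sum>k\<le>n. of_real (vertigo_coeff t i j k) * X (i + k) (j + k))"
  unfolding vertigo_def vertigo_coeff_def
  by (subst suminf_finite[of "{..n}"]) (auto simp: supp_leD[OF assms])

lemma supp_le_vertigo:
  assumes "supp_le n X"
  shows "supp_le n (vertigo t X)"
  unfolding supp_le_def vertigo_eq_sum[OF assms]
  by (auto intro!: sum.neutral simp: supp_leD[OF assms])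

lemma powr_half_eq_sqrt_power:
  assumes "0 < t"
  shows "t powr (real i / 2) = sqrt t ^ i"
proof -
  have "sqrt t ^ i = (t powr (1/2)) powr real i"
    using assms by (simp add: powr_half_sqrt powr_realpow)
  then show ?thesis by (simp add: powr_powr)
qed

lemma vertigo_coeff_pos:
  "0 < t \<Longrightarrow> vertigo_coeff t i j k
     = (t - 1) ^ k / fact k * sqrt t ^ (i + j) * sqrt (fact (i + k) / fact i) * sqrt (fact (j + k) / fact j)"
  unfolding vertigo_coeff_def by (simp add: powr_half_eq_sqrt_power power_add)

lemma sum_shift_index:
  fixes H :: "nat \<Rightarrow> nat \<Rightarrow> 'a::comm_monoid_add"
  assumes "\<And>j p. n < p \<Longrightarrow> H j p = 0"
  shows "(\<Sum>j\<le>n. H j (j + s)) = (\<Sum>p\<le>n. if s \<le> p then H (p - s) p else 0)"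
proof (cases "s \<le> n")
  case True
  have "(\<Sum>j\<le>n. H j (j + s)) = (\<Sum>j\<in>{0..n - s}. H j (j + s))"
    using assms by (intro sum.mono_neutral_right) auto
  also have "\<dots> = (\<Sum>p\<in>{s..n}. H (p - s) p)"
    using sum.shift_bounds_cl_nat_ivl[of "\<lambda>p. H (p - s) p" 0 s "n - s"] True by (simp add: add.commute)
  also have "\<dots> = (\<Sum>p\<le>n. if s \<le> p then H (p - s) p else 0)"
    by (intro sum.mono_neutral_cong_left) auto
  finally show ?thesis .
qed (use assms in \<open>auto intro!: sum.neutral\<close>)

lemma sum_diagonal_shift:
  assumes X: "supp_le n X"
  shows "(\<Sum>j\<le>n. \<Sum>k\<le>n. \<Sum>s\<le>n. F s j k * X (j + s) (k + s))
       = (\<Sum>p\<le>n. \<Sum>q\<le>n. X p q * (\<Sum>s\<le>min p q. F s (p - s) (q - s)))"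
proof -
  have shifted: "(\<Sum>j\<le>n. \<Sum>k\<le>n. F s j k * X (j + s) (k + s))
      = (\<Sum>p\<le>n. \<Sum>q\<le>n. if s \<le> p \<and> s \<le> q then F s (p - s) (q - s) * X p q else 0)" for s
  proof -
    have "(\<Sum>j\<le>n. \<Sum>k\<le>n. F s j k * X (j + s) (k + s))
        = (\<Sum>j\<le>n. \<Sum>q\<le>n. if s \<le> q then F s j (q - s) * X (j + s) q else 0)"
      by (intro sum.cong refl sum_shift_index) (simp add: supp_leD[OF X])
    also have "\<dots> = (\<Sum>p\<le>n. if s \<le> p then \<Sum>q\<le>n. if s \<le> q then F s (p - s) (q - s) * X p q else 0 else 0)"
      by (rule sum_shift_index[where H = "\<lambda>j p. \<Sum>q\<le>n. if s \<le> q then F s j (q - s) * X p q else 0"])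
        (auto intro!: sum.neutral simp: supp_leD[OF X])
    finally show ?thesis
      by (auto intro!: sum.cong)
  qed
  have "(\<Sum>j\<le>n. \<Sum>k\<le>n. \<Sum>s\<le>n. F s j k * X (j + s) (k + s))
      = (\<Sum>j\<le>n. \<Sum>s\<le>n. \<Sum>k\<le>n. F s j k * X (j + s) (k + s))"
    by (rule sum.cong[OF refl], rule sum.swap)
  also have "\<dots> = (\<Sum>s\<le>n. \<Sum>j\<le>n. \<Sum>k\<le>n. F s j k * X (j + s) (k + s))"
    by (rule sum.swap)
  also have "\<dots> = (\<Sum>s\<le>n. \<Sum>p\<le>n. \<Sum>q\<le>n. if s \<le> p \<and> s \<le> q then F s (p - s) (q - s) * X p q else 0)"
    using shifted by simp
  also have "\<dots> = (\<Sum>p\<le>n. \<Sum>s\<le>n. \<Sum>q\<le>n. if s \<le> p \<and> s \<le> q then F s (p - s) (q - s) * X p q else 0)"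
    by (rule sum.swap)
  also have "\<dots> = (\<Sum>p\<le>n. \<Sum>q\<le>n. \<Sum>s\<le>n. if s \<le> p \<and> s \<le> q then F s (p - s) (q - s) * X p q else 0)"
    by (rule sum.cong[OF refl], rule sum.swap)
  also have "\<dots> = (\<Sum>p\<le>n. \<Sum>q\<le>n. X p q * (\<Sum>s\<le>min p q. F s (p - s) (q - s)))"
  proof (intro sum.cong refl)
    fix p q assume "p \<in> {..n}" "q \<in> {..n}"
    then have "(\<Sum>s\<le>n. if s \<le> p \<and> s \<le> q then F s (p - s) (q - s) * X p q else 0)
        = (\<Sum>s\<le>min p q. F s (p - s) (q - s) * X p q)"
      by (intro sum.mono_neutral_cong_right) auto
    then show "(\<Sum>s\<le>n. if s \<le> p \<and> s \<le> q then F s (p - s) (q - s) * X p q else 0)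
        = X p q * (\<Sum>s\<le>min p q. F s (p - s) (q - s))"
      by (simp add: sum_distrib_left mult_ac)
  qed
  finally show ?thesis .
qed

lemma sum_binomial_square_complement:
  fixes \<tau> :: real
  assumes "m \<le> p" "m \<le> q"
  shows "(\<Sum>s\<le>m. \<tau> ^ (p + q - 2 * s) * (1 - \<tau>\<^sup>2) ^ s / (fact s * fact (m - s))) = \<tau> ^ (p + q - 2 * m) / fact m"
proof -
  have "(\<Sum>s\<le>m. \<tau> ^ (p + q - 2 * s) * (1 - \<tau>\<^sup>2) ^ s / (fact s * fact (m - s)))
      = \<tau> ^ (p + q - 2 * m) / fact m * (\<Sum>s\<le>m. real (m choose s) * (1 - \<tau>\<^sup>2) ^ s * (\<tau>\<^sup>2) ^ (m - s))"
    unfolding sum_distrib_left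
  proof (rule sum.cong[OF refl])
    fix s assume s: "s \<in> {..m}"
    then have "p + q - 2 * s = (p + q - 2 * m) + 2 * (m - s)" using assms by auto
    then have "\<tau> ^ (p + q - 2 * s) = \<tau> ^ (p + q - 2 * m) * (\<tau>\<^sup>2) ^ (m - s)"
      by (simp add: power_add power_mult)
    with s show "\<tau> ^ (p + q - 2 * s) * (1 - \<tau>\<^sup>2) ^ s / (fact s * fact (m - s))
        = \<tau> ^ (p + q - 2 * m) / fact m * (real (m choose s) * (1 - \<tau>\<^sup>2) ^ s * (\<tau>\<^sup>2) ^ (m - s))"
      by (simp add: binomial_fact field_simps)
  qed
  also have "\<dots> = \<tau> ^ (p + q - 2 * m) / fact m * ((1 - \<tau>\<^sup>2) + \<tau>\<^sup>2) ^ m"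
    by (simp only: binomial_ring)
  finally show ?thesis by simp
qed

lemma disp_poly_dilate:
  fixes \<tau> :: real
  shows "(\<Sum>s\<le>min p q. of_real (\<tau> ^ (p + q - 2 * s) * (1 - \<tau>\<^sup>2) ^ s / fact s) * disp_poly b (q - s) (p - s))
       = disp_poly (of_real \<tau> * b) q p"
proof -
  define M where "M = min p q"
  define g where "g s m' = of_real (\<tau> ^ (p + q - 2 * s) * (1 - \<tau>\<^sup>2) ^ s / fact s) *
      (b ^ (q - (s + m')) * (- cnj b) ^ (p - (s + m')) / (fact m' * fact (q - (s + m')) * fact (p - (s + m'))))" for s m'
  have "(\<Sum>s\<le>M. of_real (\<tau> ^ (p + q - 2 * s) * (1 - \<tau>\<^sup>2) ^ s / fact s) * disp_poly b (q - s) (p - s))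
      = (\<Sum>s\<le>M. \<Sum>m'\<le>M - s. g s m')"
  proof (rule sum.cong[OF refl])
    fix s assume "s \<in> {..M}"
    have "min (q - s) (p - s) = M - s" by (auto simp: M_def)
    then show "of_real (\<tau> ^ (p + q - 2 * s) * (1 - \<tau>\<^sup>2) ^ s / fact s) * disp_poly b (q - s) (p - s)
        = (\<Sum>m'\<le>M - s. g s m')"
      unfolding disp_poly_def g_def sum_distrib_left by (simp add: diff_diff_add)
  qed
  also have "\<dots> = (\<Sum>(s, m')\<in>{(s, m'). s + m' \<le> M}. g s m')"
    by (simp add: sum.Sigma) (rule sum.cong; auto)
  also have "\<dots> = (\<Sum>m\<le>M. \<Sum>s\<le>m. g s (m - s))"
    by (rule sum.triangle_reindex_eq)
  also have "\<dots> = (\<Sum>m\<le>M. b ^ (q - m) * (- cnj b) ^ (p - m) / (fact (q - m) * fact (p - m)) *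
        of_real (\<Sum>s\<le>m. \<tau> ^ (p + q - 2 * s) * (1 - \<tau>\<^sup>2) ^ s / (fact s * fact (m - s))))"
    unfolding of_real_sum sum_distrib_left
    by (intro sum.cong refl) (auto simp: g_def field_simps)
  also have "\<dots> = (\<Sum>m\<le>M. b ^ (q - m) * (- cnj b) ^ (p - m) / (fact (q - m) * fact (p - m)) *
        of_real (\<tau> ^ (p + q - 2 * m) / fact m))"
    by (intro sum.cong refl) (simp add: sum_binomial_square_complement M_def)
  also have "\<dots> = disp_poly (of_real \<tau> * b) q p"
    unfolding disp_poly_def M_def min.commute[of p q]
  proof (rule sum.cong[OF refl])
    fix m assume "m \<in> {..min q p}"
    then have "p + q - 2 * m = (q - m) + (p - m)" by auto
    then have e: "\<tau> ^ (p + q - 2 * m) = \<tau> ^ (q - m) * \<tau> ^ (p - m)" by (simp add: power_add)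
    have c: "- cnj (of_real \<tau> * b) = of_real \<tau> * (- cnj b)" by simp
    show "b ^ (q - m) * (- cnj b) ^ (p - m) / (fact (q - m) * fact (p - m)) * of_real (\<tau> ^ (p + q - 2 * m) / fact m)
        = (of_real \<tau> * b) ^ (q - m) * (- cnj (of_real \<tau> * b)) ^ (p - m) / (fact m * fact (q - m) * fact (p - m))"
      unfolding e c power_mult_distrib of_real_mult of_real_divide of_real_power by (simp add: field_simps)
  qed
  finally show ?thesis unfolding M_def .
qed

lemma vertigo_coeff_shifted:
  assumes t: "0 < t" and "s \<le> p" "s \<le> q"
  shows "vertigo_coeff t (p - s) (q - s) s * sqrt (fact (q - s) * fact (p - s)) * (-1) ^ (q - s)
     = (-1) ^ q * (sqrt t ^ (p + q - 2 * s) * (1 - (sqrt t)\<^sup>2) ^ s / fact s) * sqrt (fact p * fact q)"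
proof -
  have p: "sqrt (fact p / fact (p - s)) * sqrt (fact (p - s)) = sqrt (fact p)"
   and q: "sqrt (fact q / fact (q - s)) * sqrt (fact (q - s)) = sqrt (fact q)"
    by (simp_all flip: real_sqrt_mult)
  have "p + q - 2 * s = (p - s) + (q - s)" using assms by auto
  then have pow: "sqrt t ^ (p - s) * sqrt t ^ (q - s) = sqrt t ^ (p + q - 2 * s)"
    by (metis power_add)
  have "(-1::real) ^ s * (-1) ^ (q - s) = (-1) ^ q" using assms by (simp flip: power_add)
  then have sign: "(t - 1) ^ s * (-1::real) ^ (q - s) = (-1) ^ q * (1 - t) ^ s"
    by (simp add: power_minus[of "1 - t", simplified] mult_ac)
  have "vertigo_coeff t (p - s) (q - s) s * sqrt (fact (q - s) * fact (p - s)) * (-1) ^ (q - s)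
     = ((t - 1) ^ s * (-1) ^ (q - s)) / fact s * (sqrt t ^ (p - s) * sqrt t ^ (q - s))
       * (sqrt (fact p / fact (p - s)) * sqrt (fact (p - s))) * (sqrt (fact q / fact (q - s)) * sqrt (fact (q - s)))"
    unfolding vertigo_coeff_def powr_half_eq_sqrt_power[OF t] using assms by (simp add: real_sqrt_mult mult_ac)
  also have "\<dots> = (-1) ^ q * (sqrt t ^ (p + q - 2 * s) * (1 - (sqrt t)\<^sup>2) ^ s / fact s) * sqrt (fact p * fact q)"
    unfolding p q pow sign using t by (simp add: real_sqrt_mult)
  finally show ?thesis .
qed

lemma sum_vertigo_coeff_disp:
  assumes t: "0 < t"
  shows "(\<Sum>s\<le>min p q. of_real (vertigo_coeff t (p - s) (q - s) s) * (-1) ^ (q - s) * disp b (q - s) (p - s))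
       = (-1) ^ q * of_real (exp (- (cmod b ^ 2) / 2) * sqrt (fact p * fact q)) * disp_poly (of_real (sqrt t) * b) q p"
proof -
  have "(\<Sum>s\<le>min p q. of_real (vertigo_coeff t (p - s) (q - s) s) * (-1) ^ (q - s) * disp b (q - s) (p - s))
      = (\<Sum>s\<le>min p q. (-1) ^ q * of_real (exp (- (cmod b ^ 2) / 2) * sqrt (fact p * fact q)) *
          (of_real (sqrt t ^ (p + q - 2 * s) * (1 - (sqrt t)\<^sup>2) ^ s / fact s) * disp_poly b (q - s) (p - s)))"
  proof (rule sum.cong[OF refl])
    fix s assume s: "s \<in> {..min p q}"
    have "of_real (vertigo_coeff t (p - s) (q - s) s) * (-1) ^ (q - s) * disp b (q - s) (p - s)
        = of_real (vertigo_coeff t (p - s) (q - s) s * sqrt (fact (q - s) * fact (p - s)) * (-1) ^ (q - s))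
          * of_real (exp (- (cmod b ^ 2) / 2)) * disp_poly b (q - s) (p - s)"
      unfolding disp_eq_disp_poly by (simp add: mult_ac)
    also have "\<dots> = of_real ((-1) ^ q * (sqrt t ^ (p + q - 2 * s) * (1 - (sqrt t)\<^sup>2) ^ s / fact s) * sqrt (fact p * fact q))
          * of_real (exp (- (cmod b ^ 2) / 2)) * disp_poly b (q - s) (p - s)"
      using s by (subst vertigo_coeff_shifted[OF t]) auto
    finally show "of_real (vertigo_coeff t (p - s) (q - s) s) * (-1) ^ (q - s) * disp b (q - s) (p - s)
        = (-1) ^ q * of_real (exp (- (cmod b ^ 2) / 2) * sqrt (fact p * fact q)) *
          (of_real (sqrt t ^ (p + q - 2 * s) * (1 - (sqrt t)\<^sup>2) ^ s / fact s) * disp_poly b (q - s) (p - s))"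
      by (simp add: mult_ac)
  qed
  also have "\<dots> = (-1) ^ q * of_real (exp (- (cmod b ^ 2) / 2) * sqrt (fact p * fact q)) * disp_poly (of_real (sqrt t) * b) q p"
    by (simp only: disp_poly_dilate flip: sum_distrib_left)
  finally show ?thesis .
qed

lemma parity_disp_trace_vertigo:
  assumes X: "supp_le n X" and t: "0 < t"
  shows "parity_disp_trace n (vertigo t X) b
       = of_real (exp ((t - 1) * cmod b ^ 2 / 2)) * parity_disp_trace n X (of_real (sqrt t) * b)"
proof -
  define F where "F s j k = of_real (vertigo_coeff t j k s) * (-1) ^ k * disp b k j" for s j k
  have "parity_disp_trace n (vertigo t X) b = (\<Sum>j\<le>n. \<Sum>k\<le>n. \<Sum>s\<le>n. F s j k * X (j + s) (k + s))"
    unfolding parity_disp_trace_def vertigo_eq_sum[OF X] F_def sum_distrib_right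
    by (simp add: mult_ac)
  also have "\<dots> = (\<Sum>p\<le>n. \<Sum>q\<le>n. X p q * (\<Sum>s\<le>min p q. F s (p - s) (q - s)))"
    by (rule sum_diagonal_shift[OF X])
  also have "\<dots> = (\<Sum>p\<le>n. \<Sum>q\<le>n. X p q * ((-1) ^ q *
      of_real (exp (- (cmod b ^ 2) / 2) * sqrt (fact p * fact q)) * disp_poly (of_real (sqrt t) * b) q p))"
    unfolding F_def sum_vertigo_coeff_disp[OF t] ..
  also have "\<dots> = of_real (exp ((t - 1) * cmod b ^ 2 / 2)) * parity_disp_trace n X (of_real (sqrt t) * b)"
  proof -
    have "exp ((t - 1) * cmod b ^ 2 / 2) * exp (- (cmod (of_real (sqrt t) * b) ^ 2) / 2) = exp (- (cmod b ^ 2) / 2)"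
      using t by (simp add: norm_mult power_mult_distrib field_simps flip: exp_add)
    then show ?thesis
      unfolding parity_disp_trace_def disp_eq_disp_poly sum_distrib_left
      by (intro sum.cong refl) (simp add: mult_ac flip: of_real_mult)
  qed
  finally show ?thesis .
qed

lemma wigner_vertigo:
  assumes X: "supp_le n X" and t: "0 < t"
  shows "wigner (vertigo t X) a = exp (2 * (t - 1) * cmod a ^ 2) * wigner X (of_real (sqrt t) * a)"
proof -
  have e: "(t - 1) * cmod (-2 * a) ^ 2 / 2 = 2 * (t - 1) * cmod a ^ 2"
    by (simp add: norm_mult power_mult_distrib)
  have d: "of_real (sqrt t) * (-2 * a) = -2 * (of_real (sqrt t) * a)" by simp
  show ?thesis
    unfolding wigner_eq_parity_disp_trace[OF supp_le_vertigo[OF X]] wigner_eq_parity_disp_trace[OF X]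
      parity_disp_trace_vertigo[OF X t] e d
    by simp
qed

lemma vertigo_coeff_mult:
  assumes s: "0 < s" and t: "0 < t"
  shows "(\<Sum>k\<le>r. vertigo_coeff s i j k * vertigo_coeff t (i + k) (j + k) (r - k)) = vertigo_coeff (s * t) i j r"
proof -
  define C where "C = sqrt (s * t) ^ (i + j) * sqrt (fact (i + r) / fact i) * sqrt (fact (j + r) / fact j) / fact r"
  have "(\<Sum>k\<le>r. vertigo_coeff s i j k * vertigo_coeff t (i + k) (j + k) (r - k))
      = (\<Sum>k\<le>r. C * (real (r choose k) * ((s - 1) * t) ^ k * (t - 1) ^ (r - k)))"
  proof (rule sum.cong[OF refl])
    fix k assume k: "k \<in> {..r}"
    have a: "sqrt (fact (i + k) / fact i) * sqrt (fact (i + r) / fact (i + k)) = sqrt (fact (i + r) / (fact i :: real))"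
     and b: "sqrt (fact (j + k) / fact j) * sqrt (fact (j + r) / fact (j + k)) = sqrt (fact (j + r) / (fact j :: real))"
      using k by (simp_all flip: real_sqrt_mult)
    have "i + k + (j + k) = (i + j) + 2 * k" by simp
    then have c: "sqrt t ^ (i + k + (j + k)) = sqrt t ^ (i + j) * t ^ k"
      using t by (simp only: power_add power_mult) simp
    have "vertigo_coeff s i j k * vertigo_coeff t (i + k) (j + k) (r - k)
       = (s - 1) ^ k * t ^ k * (t - 1) ^ (r - k) / (fact k * fact (r - k)) * (sqrt s ^ (i + j) * sqrt t ^ (i + j))
         * (sqrt (fact (i + k) / fact i) * sqrt (fact (i + r) / fact (i + k)))
         * (sqrt (fact (j + k) / fact j) * sqrt (fact (j + r) / fact (j + k)))"
      using k unfolding vertigo_coeff_pos[OF s] vertigo_coeff_pos[OF t] c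
      by (simp add: add.assoc[symmetric] add.commute[of "r - k"] mult_ac)
    also have "\<dots> = C * (real (r choose k) * ((s - 1) * t) ^ k * (t - 1) ^ (r - k))"
      unfolding a b C_def power_mult_distrib[of "s - 1" t k]
      using k by (simp add: binomial_fact real_sqrt_mult power_mult_distrib field_simps)
    finally show "vertigo_coeff s i j k * vertigo_coeff t (i + k) (j + k) (r - k)
        = C * (real (r choose k) * ((s - 1) * t) ^ k * (t - 1) ^ (r - k))" .
  qed
  also have "\<dots> = C * ((s - 1) * t + (t - 1)) ^ r"
    by (simp only: binomial_ring sum_distrib_left)
  also have "\<dots> = vertigo_coeff (s * t) i j r"
    unfolding vertigo_coeff_pos[OF mult_pos_pos[OF s t]] C_def by (simp add: algebra_simps)
  finally show ?thesis .
qed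

lemma vertigo_vertigo:
  assumes X: "supp_le n X" and s: "0 < s" and t: "0 < t"
  shows "vertigo s (vertigo t X) = vertigo (s * t) X"
proof (intro ext)
  fix i j
  have X_zero: "X (i + m) (j + m) = 0" if "n < m" for m
    using that by (simp add: supp_leD[OF X])
  define F where "F k m = of_real (vertigo_coeff s i j k * vertigo_coeff t (i + k) (j + k) m) * X (i + (k + m)) (j + (k + m))"
    for k m
  have "vertigo s (vertigo t X) i j = (\<Sum>(k, m)\<in>{..n} \<times> {..n}. F k m)"
    unfolding vertigo_eq_sum[OF supp_le_vertigo[OF X]] vertigo_eq_sum[OF X] F_def sum_distrib_left
    by (simp add: sum.cartesian_product mult_ac add.assoc)
  also have "\<dots> = (\<Sum>(k, m)\<in>{(k, m). k + m \<le> n}. F k m)"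
    by (rule sum.mono_neutral_right) (auto simp: F_def; metis X_zero not_le)+
  also have "\<dots> = (\<Sum>r\<le>n. \<Sum>k\<le>r. F k (r - k))"
    by (rule sum.triangle_reindex_eq)
  also have "\<dots> = (\<Sum>r\<le>n. of_real (\<Sum>k\<le>r. vertigo_coeff s i j k * vertigo_coeff t (i + k) (j + k) (r - k)) * X (i + r) (j + r))"
    unfolding of_real_sum sum_distrib_right by (intro sum.cong refl) (simp add: F_def)
  also have "\<dots> = vertigo (s * t) X i j"
    unfolding vertigo_coeff_mult[OF s t] vertigo_eq_sum[OF X] ..
  finally show "vertigo s (vertigo t X) i j = vertigo (s * t) X i j" .
qed

lemma vertigo_1:
  assumes "supp_le n X"
  shows "vertigo 1 X = X"
proof (intro ext)
  fix i j
  have "vertigo 1 X i j = (\<Sum>k\<le>n. if k = 0 then X i j else 0)"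
    unfolding vertigo_eq_sum[OF assms] by (rule sum.cong) (auto simp: vertigo_coeff_def)
  then show "vertigo 1 X i j = X i j" by simp
qed

lemma vertigo_inverse:
  assumes "supp_le n X" "0 < t"
  shows "vertigo (1 / t) (vertigo t X) = X" and "vertigo t (vertigo (1 / t) X) = X"
  using assms by (simp_all add: vertigo_vertigo vertigo_1)

lemma hermitian_vertigo:
  assumes X: "supp_le n X" and H: "hermitian X"
  shows "hermitian (vertigo t X)"
  unfolding hermitian_def vertigo_eq_sum[OF X] cnj_sum
proof (intro allI sum.cong refl)
  fix i j k
  have "vertigo_coeff t j i k = vertigo_coeff t i j k" by (simp add: vertigo_coeff_def mult_ac)
  moreover have "X (j + k) (i + k) = cnj (X (i + k) (j + k))" using H unfolding hermitian_def by blast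
  ultimately show "of_real (vertigo_coeff t j i k) * X (j + k) (i + k) = cnj (of_real (vertigo_coeff t i j k) * X (i + k) (j + k))"
    by simp
qed

definition mat_comb :: "real \<Rightarrow> fmat \<Rightarrow> real \<Rightarrow> fmat \<Rightarrow> fmat" where
  "mat_comb a X b Y = (\<lambda>i j. of_real a * X i j + of_real b * Y i j)"

definition mat_scale :: "real \<Rightarrow> fmat \<Rightarrow> fmat" where
  "mat_scale c X = (\<lambda>i j. of_real c * X i j)"

definition trace_upto :: "nat \<Rightarrow> fmat \<Rightarrow> complex" where
  "trace_upto n X = (\<Sum>i\<le>n. X i i)"

lemma mat_scale_eq_mat_comb: "mat_scale c X = mat_comb c X 0 X"
  by (simp add: mat_scale_def mat_comb_def)

lemma supp_le_mat_comb: "supp_le n X \<Longrightarrow> supp_le n Y \<Longrightarrow> supp_le n (mat_comb a X b Y)"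
  unfolding supp_le_def mat_comb_def by auto

lemma supp_le_mat_scale: "supp_le n X \<Longrightarrow> supp_le n (mat_scale c X)"
  unfolding supp_le_def mat_scale_def by auto

lemma hermitian_mat_comb: "hermitian X \<Longrightarrow> hermitian Y \<Longrightarrow> hermitian (mat_comb a X b Y)"
  unfolding hermitian_def mat_comb_def by (metis complex_cnj_add complex_cnj_mult complex_cnj_complex_of_real)

lemma hermitian_mat_scale: "hermitian X \<Longrightarrow> hermitian (mat_scale c X)"
  unfolding hermitian_def mat_scale_def by (metis complex_cnj_mult complex_cnj_complex_of_real)

lemma trace_upto_mat_comb: "trace_upto n (mat_comb a X b Y) = of_real a * trace_upto n X + of_real b * trace_upto n Y"
  by (simp add: trace_upto_def mat_comb_def sum.distrib sum_distrib_left)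

lemma trace_upto_mat_scale: "trace_upto n (mat_scale c X) = of_real c * trace_upto n X"
  by (simp add: trace_upto_def mat_scale_def sum_distrib_left)

lemma wigner_mat_comb:
  assumes "supp_le n X" "supp_le n Y"
  shows "wigner (mat_comb a X b Y) z = a * wigner X z + b * wigner Y z"
proof -
  have "parity_disp_trace n (mat_comb a X b Y) c = of_real a * parity_disp_trace n X c + of_real b * parity_disp_trace n Y c" for c
    unfolding parity_disp_trace_def mat_comb_def
    by (simp only: sum_distrib_left sum.distrib[symmetric]) (intro sum.cong refl; simp add: algebra_simps)
  then show ?thesis
    unfolding wigner_eq_parity_disp_trace[OF supp_le_mat_comb[OF assms]] wigner_eq_parity_disp_trace[OF assms(1)]
      wigner_eq_parity_disp_trace[OF assms(2)]
    by (simp add: algebra_simps)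
qed

lemma wigner_mat_scale: "supp_le n X \<Longrightarrow> wigner (mat_scale c X) z = c * wigner X z"
  using wigner_mat_comb[of n X X c 0] by (simp add: mat_scale_eq_mat_comb)

lemma vertigo_mat_comb:
  assumes X: "supp_le n X" and Y: "supp_le n Y"
  shows "vertigo t (mat_comb a X b Y) = mat_comb a (vertigo t X) b (vertigo t Y)"
  unfolding mat_comb_def vertigo_eq_sum[OF supp_le_mat_comb[OF X Y, unfolded mat_comb_def]]
    vertigo_eq_sum[OF X] vertigo_eq_sum[OF Y]
  by (intro ext, simp only: sum_distrib_left sum.distrib[symmetric]) (intro sum.cong refl; simp add: algebra_simps)

lemma vertigo_mat_scale: "supp_le n X \<Longrightarrow> vertigo t (mat_scale c X) = mat_scale c (vertigo t X)"
  using vertigo_mat_comb[of n X X t c 0] by (simp add: mat_scale_eq_mat_comb)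

lemma hermitian_diag_real: "hermitian A \<Longrightarrow> Im (A i i) = 0"
  unfolding hermitian_def by (metis cnj.sel(2) neg_equal_zero)

lemma hermitian_trace_upto_real: "hermitian A \<Longrightarrow> trace_upto n A = of_real (Re (trace_upto n A))"
  by (simp add: complex_eq_iff trace_upto_def hermitian_diag_real)

lemma mtrace_eq_trace_upto: "supp_le n X \<Longrightarrow> mtrace X = trace_upto n X"
  unfolding mtrace_def trace_upto_def by (rule suminf_finite) (auto simp: supp_leD)

subsection \<open>Extreme points of \<open>A_plus n\<close>\<close>

definition wigner_cone :: "nat \<Rightarrow> fmat set" where
  "wigner_cone n = {P. supp_le n P \<and> hermitian P \<and> (\<forall>a. 0 \<le> wigner P a)}"

lemma A_plus_iff: "A \<in> A_plus n \<longleftrightarrow> A \<in> wigner_cone n \<and> trace_upto n A = 1"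
  unfolding A_plus_def wigner_cone_def qstate_supp_def trace_upto_def by auto

lemma mat_comb_in_wigner_cone:
  assumes "P \<in> wigner_cone n" "Q \<in> wigner_cone n" "0 \<le> a" "0 \<le> b"
  shows "mat_comb a P b Q \<in> wigner_cone n"
  using assms by (auto simp: wigner_cone_def supp_le_mat_comb hermitian_mat_comb wigner_mat_comb)

lemma mat_scale_in_wigner_cone: "P \<in> wigner_cone n \<Longrightarrow> 0 \<le> c \<Longrightarrow> mat_scale c P \<in> wigner_cone n"
  by (auto simp: wigner_cone_def supp_le_mat_scale hermitian_mat_scale wigner_mat_scale)

lemma vertigo_in_wigner_cone:
  assumes "P \<in> wigner_cone n" "0 < t"
  shows "vertigo t P \<in> wigner_cone n"
proof -
  have s: "supp_le n P" and h: "hermitian P" and w: "\<And>a. 0 \<le> wigner P a"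
    using assms(1) by (auto simp: wigner_cone_def)
  then show ?thesis
    using assms(2) by (simp add: wigner_cone_def supp_le_vertigo[OF s] hermitian_vertigo[OF s h] wigner_vertigo[OF s])
qed

lemma extr_mixture_eq:
  assumes "A \<in> extr C" "Y \<in> C" "Z \<in> C" "0 < l" "l < 1" "A = mat_comb l Y (1 - l) Z"
  shows "Y = A"
proof -
  have "Y = Z" using assms unfolding extr_def mat_comb_def by blast
  with assms(6) show ?thesis by (auto simp: mat_comb_def algebra_simps)
qed

lemma trace_upto_summands:
  assumes "A \<in> A_plus n" "P \<in> wigner_cone n" "A = (\<lambda>i j. P i j + Q i j)"
  shows "trace_upto n P = of_real (Re (trace_upto n P))"
    and "trace_upto n Q = 1 - of_real (Re (trace_upto n P))"
proof -
  show trP: "trace_upto n P = of_real (Re (trace_upto n P))"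
    using assms(2) by (intro hermitian_trace_upto_real) (simp add: wigner_cone_def)
  have "trace_upto n A = trace_upto n P + trace_upto n Q"
    using assms(3) by (simp add: trace_upto_def sum.distrib)
  then have "trace_upto n Q = 1 - trace_upto n P"
    using assms(1) by (simp add: A_plus_iff algebra_simps)
  then show "trace_upto n Q = 1 - of_real (Re (trace_upto n P))"
    using trP by metis
qed

lemma extr_A_plus_summand_nonpos_trace:
  assumes A: "A \<in> extr (A_plus n)" and P: "P \<in> wigner_cone n" and Q: "Q \<in> wigner_cone n"
    and APQ: "A = (\<lambda>i j. P i j + Q i j)" and nonpos: "Re (trace_upto n P) \<le> 0"
  shows "P = mat_scale (Re (trace_upto n P)) A"
proof -
  define p where "p = Re (trace_upto n P)"
  have "A \<in> A_plus n" using A unfolding extr_def by blast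
  then have trP: "trace_upto n P = of_real p" and trQ: "trace_upto n Q = 1 - of_real p"
    using trace_upto_summands[OF _ P APQ] by (simp_all add: p_def)
  have p1: "0 < 1 - p" using nonpos unfolding p_def by simp
  \<comment> \<open>\<open>A\<close> is the midpoint of \<open>X = Q / (1 - p)\<close> and \<open>Y = 2 A - X = 2 P + (1 - 2 p) X\<close>,
    and \<open>Y\<close> has non-negative Wigner function because \<open>p \<le> 0\<close>.\<close>
  define X where "X = mat_scale (1 / (1 - p)) Q"
  define Y where "Y = mat_comb 2 P ((1 - 2 * p) / (1 - p)) Q"
  have X_A_plus: "X \<in> A_plus n"
    using Q p1 by (simp add: A_plus_iff X_def mat_scale_in_wigner_cone trace_upto_mat_scale trQ)
  have Y_A_plus: "Y \<in> A_plus n"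
  proof -
    have "Y \<in> wigner_cone n"
      unfolding Y_def using P Q p1 nonpos p_def by (intro mat_comb_in_wigner_cone) auto
    moreover have "trace_upto n Y = 1"
      using p1 by (simp add: Y_def trace_upto_mat_comb trP trQ field_simps)
    ultimately show ?thesis by (simp add: A_plus_iff)
  qed
  have mix: "A = mat_comb (1/2) X (1 - 1/2) Y"
  proof (intro ext)
    fix i j
    have "1/2 * (1 / (1 - p)) + 1/2 * ((1 - 2 * p) / (1 - p)) = 1"
      using p1 by (simp add: field_simps)
    moreover have "mat_comb (1/2) X (1 - 1/2) Y i j
        = P i j + of_real (1/2 * (1 / (1 - p)) + 1/2 * ((1 - 2 * p) / (1 - p))) * Q i j"
      unfolding X_def Y_def mat_comb_def mat_scale_def by (simp add: algebra_simps)
    ultimately show "A i j = mat_comb (1/2) X (1 - 1/2) Y i j" by (simp add: APQ)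
  qed
  have "X = A" by (rule extr_mixture_eq[OF A X_A_plus Y_A_plus _ _ mix]) auto
  then have "Q i j = (1 - of_real p) * A i j" for i j
    using p1 by (auto simp: X_def mat_scale_def field_simps dest: fun_cong)
  then show ?thesis
    by (intro ext) (simp add: APQ mat_scale_def p_def[symmetric] algebra_simps)
qed

lemma extr_A_plus_summand:
  assumes A: "A \<in> extr (A_plus n)" and P: "P \<in> wigner_cone n" and Q: "Q \<in> wigner_cone n"
    and APQ: "A = (\<lambda>i j. P i j + Q i j)"
  shows "P = mat_scale (Re (trace_upto n P)) A"
proof -
  define p where "p = Re (trace_upto n P)"
  have "A \<in> A_plus n" using A unfolding extr_def by blast
  then have trP: "trace_upto n P = of_real p" and trQ: "trace_upto n Q = 1 - of_real p"
    using trace_upto_summands[OF _ P APQ] by (simp_all add: p_def)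
  consider "p \<le> 0" | "1 \<le> p" | "0 < p" "p < 1" by linarith
  then show ?thesis
  proof cases
    case 1
    then show ?thesis using extr_A_plus_summand_nonpos_trace[OF A P Q APQ] by (simp add: p_def)
  next
    case 2
    have "A = (\<lambda>i j. Q i j + P i j)" by (simp add: APQ add.commute)
    moreover have "Re (trace_upto n Q) = 1 - p" by (simp add: trQ)
    ultimately have "Q = mat_scale (1 - p) A"
      using extr_A_plus_summand_nonpos_trace[OF A Q P] 2 by simp
    then have "Q i j = of_real (1 - p) * A i j" for i j by (simp add: mat_scale_def)
    then show ?thesis
      by (intro ext) (simp add: APQ mat_scale_def p_def[symmetric] algebra_simps)
  next
    case 3
    define y where "y = mat_scale (1 / p) P"
    define z where "z = mat_scale (1 / (1 - p)) Q"
    have "y \<in> A_plus n" "z \<in> A_plus n"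
      using 3 P Q by (simp_all add: A_plus_iff y_def z_def mat_scale_in_wigner_cone trace_upto_mat_scale trP trQ)
    moreover have "A = mat_comb p y (1 - p) z"
      using 3 by (intro ext) (simp add: APQ y_def z_def mat_comb_def mat_scale_def)
    ultimately have "y = A" using extr_mixture_eq[OF A] 3 by simp
    then have "y i j = A i j" for i j by simp
    then show ?thesis
      using 3 by (intro ext) (simp add: y_def mat_scale_def p_def[symmetric] field_simps)
  qed
qed

subsection \<open>States and diagonal dominance\<close>

lemma is_state_hermitian: "is_state \<rho> \<Longrightarrow> hermitian \<rho>"
  unfolding is_state_def by blast

lemma is_state_psd: "is_state \<rho> \<Longrightarrow> 0 \<le> Re (\<Sum>i\<le>N. \<Sum>j\<le>N. cnj (v i) * \<rho> i j * v j)"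
  unfolding is_state_def by blast

lemma is_state_diag_nonneg:
  assumes "is_state \<rho>"
  shows "0 \<le> Re (\<rho> i i)"
proof -
  have "cnj (if a = i then 1 else 0) * \<rho> a b * (if b = i then 1 else 0)
      = (if a = i then (if b = i then \<rho> i i else 0) else 0)" for a b
    by auto
  moreover have "(\<Sum>b\<le>i. if a = i then (if b = i then \<rho> i i else 0) else 0) = (if a = i then \<rho> i i else 0)" for a
    by simp
  ultimately have "(\<Sum>a\<le>i. \<Sum>b\<le>i. cnj (if a = i then 1 else 0) * \<rho> a b * (if b = i then 1 else 0)) = \<rho> i i"
    by simp
  then show ?thesis using is_state_psd[OF assms, where N = i and v = "\<lambda>a. if a = i then 1 else 0"] by simp
qed

lemma is_state_zero_diag_row:
  assumes \<rho>: "is_state \<rho>" and zero: "\<rho> i i = 0"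
  shows "\<rho> i j = 0"
proof (rule ccontr)
  assume nz: "\<rho> i j \<noteq> 0"
  then have ij: "i \<noteq> j" using zero by auto
  have H: "\<rho> j i = cnj (\<rho> i j)" using is_state_hermitian[OF \<rho>] unfolding hermitian_def by blast
  define r where "r = (Re (\<rho> j j) + 1) / (2 * cmod (\<rho> i j) ^ 2)"
  define v where "v k = (if k = i then - of_real r * \<rho> i j else if k = j then 1 else 0)" for k
  define f where "f a b = cnj (v a) * \<rho> a b * v b" for a b
  have "(\<Sum>a\<le>max i j. \<Sum>b\<le>max i j. f a b) = (\<Sum>a\<in>{i, j}. \<Sum>b\<in>{i, j}. f a b)"
  proof -
    have "(\<Sum>a\<le>max i j. \<Sum>b\<le>max i j. f a b) = (\<Sum>a\<in>{i, j}. \<Sum>b\<le>max i j. f a b)"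
      by (rule sum.mono_neutral_right) (auto simp: f_def v_def)
    also have "\<dots> = (\<Sum>a\<in>{i, j}. \<Sum>b\<in>{i, j}. f a b)"
      by (intro sum.cong refl sum.mono_neutral_right) (auto simp: f_def v_def)
    finally show ?thesis .
  qed
  also have "\<dots> = - of_real (2 * r * cmod (\<rho> i j) ^ 2) + \<rho> j j"
  proof -
    have "(complex_of_real (cmod (\<rho> i j)))\<^sup>2 = \<rho> i j * cnj (\<rho> i j)"
      using complex_norm_square[of "\<rho> i j"] by simp
    then show ?thesis using ij unfolding f_def v_def by (simp add: zero H algebra_simps)
  qed
  finally have "Re (\<Sum>a\<le>max i j. \<Sum>b\<le>max i j. f a b) = - (2 * r * cmod (\<rho> i j) ^ 2) + Re (\<rho> j j)"
    by simp
  also have "2 * r * cmod (\<rho> i j) ^ 2 = Re (\<rho> j j) + 1"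
    unfolding r_def using nz by (simp add: field_simps)
  finally show False using is_state_psd[OF \<rho>, where N = "max i j" and v = v] unfolding f_def by simp
qed

lemma supp_le_mixture_components:
  assumes y: "is_state y" and z: "is_state z" and l: "0 < l" "l < 1"
    and supp: "supp_le n (mat_comb l y (1 - l) z)"
  shows "supp_le n y" and "supp_le n z"
proof -
  have diag: "y i i = 0 \<and> z i i = 0" if "n < i" for i
  proof -
    have "Re (mat_comb l y (1 - l) z i i) = 0"
      using supp_leD[OF supp, of i i] that by simp
    then have "l * Re (y i i) + (1 - l) * Re (z i i) = 0"
      by (simp add: mat_comb_def)
    moreover have "0 \<le> Re (y i i)" "0 \<le> Re (z i i)" using is_state_diag_nonneg y z by auto
    ultimately have "Re (y i i) = 0 \<and> Re (z i i) = 0" using l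
      by (smt (verit) mult_nonneg_nonneg mult_pos_pos)
    then show ?thesis
      using hermitian_diag_real[OF is_state_hermitian[OF y]] hermitian_diag_real[OF is_state_hermitian[OF z]]
      by (simp add: complex_eq_iff)
  qed
  have "supp_le n \<rho>" if \<rho>: "is_state \<rho>" and zero: "\<And>i. n < i \<Longrightarrow> \<rho> i i = 0" for \<rho>
    unfolding supp_le_def
  proof (intro allI impI)
    fix i j assume "n < i \<or> n < j"
    moreover have "\<rho> i j = cnj (\<rho> j i)" using is_state_hermitian[OF \<rho>] unfolding hermitian_def by blast
    ultimately show "\<rho> i j = 0" using is_state_zero_diag_row[OF \<rho> zero] by auto
  qed
  then show "supp_le n y" "supp_le n z" using diag y z by auto
qed

lemma is_state_trace_upto:
  assumes y: "is_state y" and s: "supp_le n y"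
  shows "trace_upto n y = 1"
proof -
  have "(\<lambda>i. y i i) sums (\<Sum>i\<le>n. y i i)"
    by (rule sums_finite) (auto simp: supp_leD[OF s])
  then show ?thesis
    using y unfolding is_state_def trace_upto_def by (simp add: sums_unique2)
qed

lemma sum_if_eq_card:
  assumes "finite S" "i \<in> S"
  shows "(\<Sum>j\<in>S. if i = j then x else y) = x + (real (card S) - 1) * (y::real)"
proof -
  have "(\<Sum>j\<in>S. if i = j then x else y) = (\<Sum>j\<in>S. y + (if i = j then x - y else 0))"
    by (rule sum.cong) auto
  also have "\<dots> = real (card S) * y + (x - y)"
    using assms by (simp add: sum.distrib)
  finally show ?thesis by (simp add: algebra_simps)
qed

lemma Re_cross_term_lower_bound:
  assumes "cmod m \<le> B"
  shows "- (B * (cmod u ^ 2 + cmod w ^ 2) / 2) \<le> Re (cnj u * m * w)"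
proof -
  have "- Re (cnj u * m * w) \<le> cmod u * cmod m * cmod w"
    using abs_Re_le_cmod[of "cnj u * m * w"] by (simp add: norm_mult)
  also have "\<dots> = cmod m * (cmod u * cmod w)" by (simp add: mult_ac)
  also have "\<dots> \<le> B * (cmod u * cmod w)"
    using assms by (intro mult_right_mono) auto
  also have "\<dots> \<le> B * (cmod u ^ 2 + cmod w ^ 2) / 2"
  proof -
    have "0 \<le> B" using assms norm_ge_zero[of m] by linarith
    moreover have "2 * (cmod u * cmod w) \<le> cmod u ^ 2 + cmod w ^ 2"
      using sum_squares_bound[of "cmod u" "cmod w"] by (simp add: mult_ac)
    ultimately show ?thesis using mult_left_mono by fastforce
  qed
  finally show ?thesis by linarith
qed

lemma Re_diag_term:
  assumes "Im m = 0"
  shows "Re (cnj u * m * u) = Re m * cmod u ^ 2"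
proof -
  have "m = of_real (Re m)" using assms by (simp add: complex_eq_iff)
  then have "cnj u * m * u = of_real (Re m * cmod u ^ 2)"
    by (metis (no_types, lifting) complex_norm_square mult.commute mult.left_commute of_real_mult of_real_power)
  then show ?thesis by simp
qed

lemma quadratic_form_supp_le:
  assumes "supp_le n M"
  shows "(\<Sum>i\<le>N. \<Sum>j\<le>N. cnj (v i) * M i j * v j)
       = (\<Sum>i\<le>min N n. \<Sum>j\<le>min N n. cnj (v i) * M i j * v j)"
proof -
  have "(\<Sum>i\<le>N. \<Sum>j\<le>N. cnj (v i) * M i j * v j) = (\<Sum>i\<le>min N n. \<Sum>j\<le>N. cnj (v i) * M i j * v j)"
    by (rule sum.mono_neutral_right) (auto simp: supp_leD[OF assms] intro!: sum.neutral)
  also have "\<dots> = (\<Sum>i\<le>min N n. \<Sum>j\<le>min N n. cnj (v i) * M i j * v j)"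
    by (intro sum.cong refl sum.mono_neutral_right) (auto simp: supp_leD[OF assms])
  finally show ?thesis .
qed

lemma diag_dominant_psd:
  assumes M: "supp_le n M" and real: "\<And>i. Im (M i i) = 0"
    and diag: "\<And>i. i \<le> n \<Longrightarrow> real n * B \<le> Re (M i i)"
    and off: "\<And>i j. i \<noteq> j \<Longrightarrow> cmod (M i j) \<le> B" and B: "0 \<le> B"
  shows "0 \<le> Re (\<Sum>i\<le>N. \<Sum>j\<le>N. cnj (v i) * M i j * v j)"
proof -
  define S where "S = {..min N n}"
  have fS: "finite S" and cS: "card S \<le> n + 1" unfolding S_def by auto
  define a where "a i = cmod (v i) ^ 2" for i
  define g where "g i j = (if i = j then real n * B * a i / 2 else - B * a i / 2)" for i j
  have lower: "g i j + g j i \<le> Re (cnj (v i) * M i j * v j)" if "i \<in> S" for i j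
  proof (cases "i = j")
    case True
    have "real n * B * a i \<le> Re (M i i) * a i"
      using that diag by (intro mult_right_mono) (auto simp: S_def a_def)
    moreover have "Re (cnj (v i) * M i i * v i) = Re (M i i) * a i"
      unfolding a_def by (rule Re_diag_term[OF real])
    moreover have "g i i = real n * B * a i / 2" by (simp add: g_def)
    ultimately show ?thesis unfolding True[symmetric] by linarith
  next
    case False
    then have "g i j + g j i = - (B * (a i + a j) / 2)" by (simp add: g_def field_simps)
    then show ?thesis
      using Re_cross_term_lower_bound[OF off[OF False], of "v i" "v j", folded a_def] by linarith
  qed
  have "0 \<le> (\<Sum>j\<in>S. g i j)" if "i \<in> S" for i
  proof -
    have "(\<Sum>j\<in>S. g i j) = B * a i / 2 * (real n + 1 - real (card S))"
      unfolding g_def sum_if_eq_card[OF fS that] by (simp add: field_simps)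
    also have "\<dots> \<ge> 0" using B cS by (intro mult_nonneg_nonneg) (auto simp: a_def)
    finally show ?thesis .
  qed
  then have "0 \<le> 2 * (\<Sum>i\<in>S. \<Sum>j\<in>S. g i j)"
    by (simp add: sum_nonneg)
  also have "\<dots> = (\<Sum>i\<in>S. \<Sum>j\<in>S. g i j + g j i)"
    by (simp add: sum.distrib sum.swap[of "\<lambda>i j. g j i"])
  also have "\<dots> \<le> (\<Sum>i\<in>S. \<Sum>j\<in>S. Re (cnj (v i) * M i j * v j))"
    using lower by (intro sum_mono) auto
  finally show ?thesis unfolding quadratic_form_supp_le[OF M] S_def[symmetric] by (simp only: Re_sum)
qed

subsection \<open>Growth of the Vertigo image\<close>

definition entry_norm_sum :: "nat \<Rightarrow> fmat \<Rightarrow> real" where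
  "entry_norm_sum n A = (\<Sum>p\<le>n. \<Sum>q\<le>n. cmod (A p q))"

lemma entry_norm_sum_nonneg: "0 \<le> entry_norm_sum n A"
  unfolding entry_norm_sum_def by (simp add: sum_nonneg)

lemma norm_entry_le_entry_norm_sum:
  assumes A: "supp_le n A"
  shows "cmod (A p q) \<le> entry_norm_sum n A"
proof (cases "p \<le> n \<and> q \<le> n")
  case True
  then have "cmod (A p q) \<le> (\<Sum>q\<le>n. cmod (A p q))"
    by (intro member_le_sum) auto
  also have "\<dots> \<le> entry_norm_sum n A" unfolding entry_norm_sum_def
    using True by (intro member_le_sum[of p "{..n}" "\<lambda>p. \<Sum>q\<le>n. cmod (A p q)"]) (auto intro: sum_nonneg)
  finally show ?thesis .
next
  case False
  then show ?thesis using supp_leD[OF A, of p q] entry_norm_sum_nonneg by auto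
qed

lemma vertigo_coeff_nonneg: "1 \<le> t \<Longrightarrow> 0 \<le> vertigo_coeff t i j s"
  by (simp add: vertigo_coeff_pos)

lemma sqrt_fact_ratio_le: "i + s \<le> n \<Longrightarrow> sqrt (fact (i + s) / fact i) \<le> sqrt (fact n :: real)"
proof -
  assume "i + s \<le> n"
  have "fact (i + s) / fact i \<le> (fact (i + s) :: real)"
    by (simp add: divide_le_eq fact_ge_1 mult_le_cancel_left1 fact_gt_zero)
  also have "\<dots> \<le> fact n" using \<open>i + s \<le> n\<close> by (rule fact_mono)
  finally show ?thesis by simp
qed

lemma vertigo_coeff_le:
  assumes t: "1 \<le> t" and "i + s \<le> n" "j + s \<le> n"
  shows "vertigo_coeff t i j s \<le> fact n * sqrt t ^ (i + j + 2 * s)"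
proof -
  have "(t - 1) ^ s / fact s \<le> (t - 1) ^ s"
    using t by (simp add: divide_le_eq fact_ge_1 mult_le_cancel_left1)
  also have "\<dots> \<le> sqrt t ^ (2 * s)"
    using t by (simp add: power_mult power_mono)
  finally have h1: "(t - 1) ^ s / fact s \<le> sqrt t ^ (2 * s)" .
  have h2: "sqrt (fact (i + s) / fact i) * sqrt (fact (j + s) / fact j) \<le> sqrt (fact n) * sqrt (fact n :: real)"
    using sqrt_fact_ratio_le assms by (intro mult_mono) auto
  have "vertigo_coeff t i j s
      = ((t - 1) ^ s / fact s) * sqrt t ^ (i + j) * (sqrt (fact (i + s) / fact i) * sqrt (fact (j + s) / fact j))"
    using t by (simp add: vertigo_coeff_pos mult_ac)
  also have "\<dots> \<le> sqrt t ^ (2 * s) * sqrt t ^ (i + j) * (sqrt (fact n) * sqrt (fact n))"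
    by (rule mult_mono[OF mult_right_mono[OF h1] h2]) (use t in auto)
  also have "\<dots> = fact n * sqrt t ^ (i + j + 2 * s)" by (simp add: power_add mult_ac)
  finally show ?thesis .
qed

text \<open>The hypothesis \<open>not_top\<close> excludes exactly the terms with \<open>i = j\<close> and \<open>s = n - i\<close>,
  i.e. those carrying \<open>A n n\<close>, which are of order \<open>t\<^sup>n\<close>.\<close>

lemma norm_vertigo_term_le:
  assumes t: "1 \<le> t" and A: "supp_le n A"
    and not_top: "i + s \<le> n \<and> j + s \<le> n \<longrightarrow> i + j + 2 * s + 1 \<le> 2 * n"
  shows "cmod (of_real (vertigo_coeff t i j s) * A (i + s) (j + s))
       \<le> fact n * entry_norm_sum n A * (sqrt t ^ (2 * n) / sqrt t)"
proof (cases "i + s \<le> n \<and> j + s \<le> n")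
  case True
  have "vertigo_coeff t i j s \<le> fact n * sqrt t ^ (i + j + 2 * s)"
    using True by (intro vertigo_coeff_le[OF t]) auto
  also have "\<dots> \<le> fact n * (sqrt t ^ (2 * n) / sqrt t)"
  proof -
    have "sqrt t ^ (i + j + 2 * s + 1) \<le> sqrt t ^ (2 * n)"
      using True not_top t by (intro power_increasing) auto
    then show ?thesis using t by (simp add: field_simps)
  qed
  finally have "vertigo_coeff t i j s * cmod (A (i + s) (j + s))
      \<le> fact n * (sqrt t ^ (2 * n) / sqrt t) * entry_norm_sum n A"
    using norm_entry_le_entry_norm_sum[OF A] t by (intro mult_mono) auto
  then show ?thesis using vertigo_coeff_nonneg[OF t] by (simp add: norm_mult mult_ac)
next
  case False
  then have "A (i + s) (j + s) = 0" by (intro supp_leD[OF A]) auto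
  then show ?thesis using t entry_norm_sum_nonneg by simp
qed

lemma norm_vertigo_off_diag_le:
  assumes t: "1 \<le> t" and A: "supp_le n A" and "i \<noteq> j"
  shows "cmod (vertigo t A i j) \<le> real (n + 1) * (fact n * entry_norm_sum n A * (sqrt t ^ (2 * n) / sqrt t))"
proof -
  have "cmod (vertigo t A i j) \<le> (\<Sum>s\<le>n. cmod (of_real (vertigo_coeff t i j s) * A (i + s) (j + s)))"
    unfolding vertigo_eq_sum[OF A] by (rule norm_sum)
  also have "\<dots> \<le> (\<Sum>s\<le>n. fact n * entry_norm_sum n A * (sqrt t ^ (2 * n) / sqrt t))"
    using assms by (intro sum_mono norm_vertigo_term_le[OF t A]) auto
  finally show ?thesis by simp
qed

lemma vertigo_diag_real: "supp_le n A \<Longrightarrow> hermitian A \<Longrightarrow> Im (vertigo t A i i) = 0"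
  by (simp add: vertigo_eq_sum Im_sum hermitian_diag_real)

lemma vertigo_coeff_top_ge:
  assumes t: "2 \<le> t" and i: "i \<le> n"
  shows "sqrt t ^ (2 * n) / 2 ^ n \<le> vertigo_coeff t i i (n - i)"
proof -
  have t0: "0 < t" using t by simp
  have "vertigo_coeff t i i (n - i)
      = (t - 1) ^ (n - i) / fact (n - i) * sqrt t ^ (2 * i) * (sqrt (fact n / fact i) * sqrt (fact n / fact i))"
    unfolding vertigo_coeff_pos[OF t0] using i by (simp only: mult_2 le_add_diff_inverse mult.assoc)
  also have "\<dots> = (t - 1) ^ (n - i) * sqrt t ^ (2 * i) * real (n choose i)"
    using i by (simp add: binomial_fact)
  finally have V: "vertigo_coeff t i i (n - i) = (t - 1) ^ (n - i) * sqrt t ^ (2 * i) * real (n choose i)" .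
  have "sqrt t ^ (2 * n) / 2 ^ n \<le> sqrt t ^ (2 * n) / 2 ^ (n - i)"
    by (intro divide_left_mono power_increasing) auto
  also have "\<dots> = (t / 2) ^ (n - i) * sqrt t ^ (2 * i)"
  proof -
    have "t ^ (n - i) = sqrt t ^ (2 * (n - i))" using t0 by (simp add: power_mult)
    moreover have "2 * (n - i) + 2 * i = 2 * n" using i by simp
    ultimately show ?thesis by (simp add: power_divide field_simps flip: power_add)
  qed
  also have "\<dots> \<le> (t - 1) ^ (n - i) * sqrt t ^ (2 * i)"
    using t by (intro mult_right_mono power_mono) auto
  also have "\<dots> \<le> (t - 1) ^ (n - i) * sqrt t ^ (2 * i) * real (n choose i)"
    using t i by (simp add: Suc_leI zero_less_binomial)
  finally show ?thesis unfolding V .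
qed

lemma vertigo_diag_ge:
  assumes t: "2 \<le> t" and A: "supp_le n A" and i: "i \<le> n" and Ann: "0 \<le> Re (A n n)"
  shows "sqrt t ^ (2 * n) / 2 ^ n * Re (A n n) - real (n + 1) * (fact n * entry_norm_sum n A * (sqrt t ^ (2 * n) / sqrt t))
       \<le> Re (vertigo t A i i)"
proof -
  define T where "T s = of_real (vertigo_coeff t i i s) * A (i + s) (i + s)" for s
  define K where "K = fact n * entry_norm_sum n A * (sqrt t ^ (2 * n) / sqrt t)"
  have t1: "1 \<le> t" using t by simp
  have ni: "n - i \<in> {..n}" by simp
  have "cmod (\<Sum>s\<in>{..n} - {n - i}. T s) \<le> (\<Sum>s\<in>{..n} - {n - i}. cmod (T s))" by (rule norm_sum)
  also have "\<dots> \<le> (\<Sum>s\<in>{..n} - {n - i}. K)"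
    unfolding T_def K_def by (intro sum_mono norm_vertigo_term_le[OF t1 A]) auto
  also have "\<dots> \<le> real (n + 1) * K"
  proof -
    have "0 \<le> K" using t entry_norm_sum_nonneg[of n A] by (simp add: K_def)
    then show ?thesis by (simp add: card_Diff_singleton mult_right_mono)
  qed
  finally have rest: "- (real (n + 1) * K) \<le> Re (\<Sum>s\<in>{..n} - {n - i}. T s)"
    using abs_Re_le_cmod[of "\<Sum>s\<in>{..n} - {n - i}. T s"] by linarith
  have "sqrt t ^ (2 * n) / 2 ^ n * Re (A n n) \<le> vertigo_coeff t i i (n - i) * Re (A n n)"
    by (intro mult_right_mono vertigo_coeff_top_ge[OF t i] Ann)
  also have "\<dots> = Re (T (n - i))"
    unfolding T_def using i by simp
  finally have top: "sqrt t ^ (2 * n) / 2 ^ n * Re (A n n) \<le> Re (T (n - i))" .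
  have "vertigo t A i i = T (n - i) + (\<Sum>s\<in>{..n} - {n - i}. T s)"
    unfolding vertigo_eq_sum[OF A] T_def by (rule sum.remove[OF finite_atMost ni])
  then show ?thesis using top rest unfolding K_def by simp
qed

text \<open>The diagonal of \<open>vertigo t A\<close> is at least \<open>t\<^sup>n A\<^sub>n\<^sub>n / 2\<^sup>n - O(t\<^sup>n / \<surd>t)\<close>, while the
  off-diagonal entries are \<open>O(t\<^sup>n / \<surd>t)\<close> with the explicit constant of
  \<open>norm_vertigo_off_diag_le\<close>; the threshold makes \<open>\<surd>t\<close> large enough for the diagonal to
  dominate \<open>n + 2\<close> times the off-diagonal bound.\<close>

definition vertigo_threshold :: "nat \<Rightarrow> fmat \<Rightarrow> real" where
  "vertigo_threshold n A
     = max 2 ((2 ^ n * real (n + 2) * real (n + 1) * fact n * entry_norm_sum n A / Re (A n n))\<^sup>2)"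

lemma vertigo_diag_dominant:
  assumes A: "supp_le n A" and Ann: "0 < Re (A n n)" and t: "vertigo_threshold n A \<le> t"
  obtains B where "0 \<le> B"
    and "\<And>i. i \<le> n \<Longrightarrow> real n * B \<le> Re (vertigo t A i i)"
    and "\<And>i. i \<le> n \<Longrightarrow> 0 < Re (vertigo t A i i)"
    and "\<And>i j. i \<noteq> j \<Longrightarrow> cmod (vertigo t A i j) \<le> B"
proof -
  define \<tau> where "\<tau> = sqrt t"
  define D where "D = 2 ^ n * real (n + 2) * real (n + 1) * fact n * entry_norm_sum n A"
  define B where "B = real (n + 1) * (fact n * entry_norm_sum n A * (\<tau> ^ (2 * n) / \<tau>))"
  define M where "M = \<tau> ^ (2 * n) / 2 ^ n * Re (A n n)"
  have t2: "2 \<le> t" using t by (simp add: vertigo_threshold_def)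
  have \<tau>1: "1 \<le> \<tau>" unfolding \<tau>_def using t2 by simp
  have "(D / Re (A n n))\<^sup>2 \<le> t" using t by (simp add: vertigo_threshold_def D_def)
  then have "D / Re (A n n) \<le> \<tau>" unfolding \<tau>_def by (metis real_le_rsqrt)
  then have D: "D \<le> \<tau> * Re (A n n)" using Ann by (simp add: divide_le_eq mult.commute)
  have B0: "0 \<le> B" unfolding B_def using \<tau>1 entry_norm_sum_nonneg[of n A] by simp
  have M0: "0 < M" unfolding M_def using Ann \<tau>1 by simp
  have "real (n + 2) * B = D * (\<tau> ^ (2 * n) / (\<tau> * 2 ^ n))"
    unfolding B_def D_def using \<tau>1 by (simp add: field_simps)
  also have "\<dots> \<le> (\<tau> * Re (A n n)) * (\<tau> ^ (2 * n) / (\<tau> * 2 ^ n))"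
    using D \<tau>1 by (intro mult_right_mono) auto
  also have "\<dots> = M" unfolding M_def using \<tau>1 by (simp add: field_simps)
  finally have MB: "real n * B + 2 * B \<le> M" by (simp add: algebra_simps)
  have nB0: "0 \<le> real n * B" using B0 by simp
  have diag: "M - B \<le> Re (vertigo t A i i)" if "i \<le> n" for i
    using vertigo_diag_ge[OF t2 A that] Ann unfolding M_def B_def \<tau>_def by simp
  show ?thesis
  proof
    show "0 \<le> B" by (fact B0)
    show "real n * B \<le> Re (vertigo t A i i)" if "i \<le> n" for i
      using diag[OF that] MB B0 by linarith
    show "0 < Re (vertigo t A i i)" if "i \<le> n" for i
      using diag[OF that] MB nB0 M0 by linarith
    show "cmod (vertigo t A i j) \<le> B" if "i \<noteq> j" for i j
      using norm_vertigo_off_diag_le[OF _ A that, of t] t2 unfolding B_def \<tau>_def by simp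
  qed
qed

lemma vertigo_psd_large_t:
  assumes A: "supp_le n A" "hermitian A" and Ann: "0 < Re (A n n)" and t: "vertigo_threshold n A \<le> t"
  shows "0 \<le> Re (\<Sum>i\<le>N. \<Sum>j\<le>N. cnj (v i) * vertigo t A i j * v j)"
    and "0 < Re (trace_upto n (vertigo t A))"
proof -
  obtain B where "0 \<le> B" "\<And>i. i \<le> n \<Longrightarrow> real n * B \<le> Re (vertigo t A i i)"
      and pos: "\<And>i. i \<le> n \<Longrightarrow> 0 < Re (vertigo t A i i)"
      and "\<And>i j. i \<noteq> j \<Longrightarrow> cmod (vertigo t A i j) \<le> B"
    using vertigo_diag_dominant[OF A(1) Ann t] by blast
  then show "0 \<le> Re (\<Sum>i\<le>N. \<Sum>j\<le>N. cnj (v i) * vertigo t A i j * v j)"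
    by (intro diag_dominant_psd[OF supp_le_vertigo[OF A(1)] vertigo_diag_real[OF A]])
  show "0 < Re (trace_upto n (vertigo t A))"
    unfolding trace_upto_def Re_sum using pos by (intro sum_pos) auto
qed

subsection \<open>Extremality of the normalised Vertigo image\<close>

lemma extr_subset: "x \<in> extr C \<Longrightarrow> x \<in> C' \<Longrightarrow> C' \<subseteq> C \<Longrightarrow> x \<in> extr C'"
  unfolding extr_def by blast

lemma vertigo_norm_eq_mat_scale:
  assumes "supp_le n A" "trace_upto n (vertigo t A) = of_real c"
  shows "vertigo_norm t A = mat_scale (1 / c) (vertigo t A)"
  using assms(2) unfolding vertigo_norm_def mtrace_eq_trace_upto[OF supp_le_vertigo[OF assms(1)]]
  by (simp add: mat_scale_def divide_inverse mult.commute)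

lemma mat_scale_vertigo_in_D_plus:
  assumes A: "A \<in> A_plus n" and t: "0 < t" and c: "0 < c" "trace_upto n (vertigo t A) = of_real c"
    and psd: "\<And>N v. 0 \<le> Re (\<Sum>i\<le>N. \<Sum>j\<le>N. cnj (v i) * vertigo t A i j * v j)"
  shows "mat_scale (1 / c) (vertigo t A) \<in> D_plus"
proof -
  define \<rho> where "\<rho> = mat_scale (1 / c) (vertigo t A)"
  have sA: "supp_le n A" and hA: "hermitian A" and wA: "\<And>a. 0 \<le> wigner A a"
    using A by (auto simp: A_plus_iff wigner_cone_def)
  have s\<rho>: "supp_le n \<rho>" unfolding \<rho>_def by (intro supp_le_mat_scale supp_le_vertigo sA)
  have "is_state \<rho>"
    unfolding is_state_def
  proof (intro conjI allI)
    show "hermitian \<rho>" unfolding \<rho>_def by (intro hermitian_mat_scale hermitian_vertigo[OF sA hA])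
    show "0 \<le> Re (\<Sum>i\<le>N. \<Sum>j\<le>N. cnj (v i) * \<rho> i j * v j)" for N v
    proof -
      have "(\<Sum>i\<le>N. \<Sum>j\<le>N. cnj (v i) * \<rho> i j * v j)
          = of_real (1 / c) * (\<Sum>i\<le>N. \<Sum>j\<le>N. cnj (v i) * vertigo t A i j * v j)"
        unfolding \<rho>_def mat_scale_def sum_distrib_left by (simp add: mult_ac)
      then show ?thesis using psd[where N = N and v = v] c by simp
    qed
    have "(\<lambda>i. \<rho> i i) sums trace_upto n \<rho>"
      unfolding trace_upto_def by (rule sums_finite) (auto simp: supp_leD[OF s\<rho>])
    then show "(\<lambda>i. \<rho> i i) sums 1"
      using c by (simp add: \<rho>_def trace_upto_mat_scale)
  qed
  moreover have "0 \<le> wigner \<rho> a" for a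
    unfolding \<rho>_def wigner_mat_scale[OF supp_le_vertigo[OF sA]] wigner_vertigo[OF sA t]
    using wA c by simp
  ultimately show ?thesis by (simp add: D_plus_def \<rho>_def)
qed

lemma D_plus_mixture_component_eq:
  assumes A: "A \<in> extr (A_plus n)" and t: "0 < t" and c: "0 < c"
    and trV: "trace_upto n (vertigo t A) = of_real c"
    and y: "y \<in> D_plus" and z: "z \<in> D_plus" and l: "0 < l" "l < 1"
    and mix: "mat_scale (1 / c) (vertigo t A) = mat_comb l y (1 - l) z"
  shows "y = mat_scale (1 / c) (vertigo t A)"
proof -
  define V where "V = vertigo t A"
  define s where "s = 1 / t"
  have sA: "supp_le n A" using A by (auto simp: extr_def A_plus_iff wigner_cone_def)
  have sV: "supp_le n V" unfolding V_def by (rule supp_le_vertigo[OF sA])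
  have s0: "0 < s" unfolding s_def using t by simp
  have ys: "is_state y" and zs: "is_state z" using y z by (auto simp: D_plus_def)
  have "supp_le n (mat_comb l y (1 - l) z)"
    using mix supp_le_mat_scale[OF sV, of "1 / c"] by (simp add: V_def)
  then have sy: "supp_le n y" and sz: "supp_le n z"
    using supp_le_mixture_components[OF ys zs l] by auto
  define P where "P = mat_scale (c * l) (vertigo s y)"
  define Q where "Q = mat_scale (c * (1 - l)) (vertigo s z)"
  have "vertigo s (mat_scale (1 / c) V) = mat_comb l (vertigo s y) (1 - l) (vertigo s z)"
    using mix by (simp add: V_def vertigo_mat_comb[OF sy sz])
  then have "mat_scale (1 / c) A = mat_comb l (vertigo s y) (1 - l) (vertigo s z)"
    by (simp add: V_def s_def vertigo_mat_scale[OF supp_le_vertigo[OF sA]] vertigo_inverse[OF sA t])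
  then have APQ: "A = (\<lambda>i j. P i j + Q i j)"
    using c by (intro ext) (simp add: P_def Q_def mat_scale_def mat_comb_def fun_eq_iff field_simps)
  have "y \<in> wigner_cone n" "z \<in> wigner_cone n"
    using y z sy sz by (auto simp: wigner_cone_def D_plus_def is_state_hermitian)
  then have "P \<in> wigner_cone n" "Q \<in> wigner_cone n"
    using c l s0 by (simp_all add: P_def Q_def mat_scale_in_wigner_cone vertigo_in_wigner_cone)
  define p where "p = Re (trace_upto n P)"
  have "P = mat_scale p A"
    using extr_A_plus_summand[OF A _ _ APQ] \<open>P \<in> wigner_cone n\<close> \<open>Q \<in> wigner_cone n\<close>
    by (simp add: p_def)
  then have "vertigo t P = mat_scale p V"
    by (simp add: vertigo_mat_scale[OF sA] V_def)
  moreover have "vertigo t P = mat_scale (c * l) y"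
    unfolding P_def s_def vertigo_mat_scale[OF supp_le_vertigo[OF sy]] vertigo_inverse[OF sy t] ..
  ultimately have eq: "of_real (c * l) * y i j = of_real p * V i j" for i j
    by (metis mat_scale_def)
  have "of_real (c * l) * trace_upto n y = of_real p * trace_upto n V"
    unfolding trace_upto_def sum_distrib_left using eq by simp
  then have "p = l"
    using c is_state_trace_upto[OF ys sy] trV by (simp add: V_def flip: of_real_mult)
  then show ?thesis
    using eq l c by (intro ext) (simp add: V_def mat_scale_def field_simps)
qed

lemma mat_scale_vertigo_extr_D_plus:
  assumes A: "A \<in> extr (A_plus n)" and t: "0 < t" and c: "0 < c"
    and trV: "trace_upto n (vertigo t A) = of_real c"
    and \<rho>: "mat_scale (1 / c) (vertigo t A) \<in> D_plus"
  shows "mat_scale (1 / c) (vertigo t A) \<in> extr D_plus"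
  unfolding extr_def
proof (intro CollectI conjI allI impI \<rho>)
  fix y z l assume y: "y \<in> D_plus" and z: "z \<in> D_plus" and l: "0 < l" "l < 1"
    and "mat_scale (1 / c) (vertigo t A) = (\<lambda>i j. of_real l * y i j + of_real (1 - l) * z i j)"
  then have mix: "mat_scale (1 / c) (vertigo t A) = mat_comb l y (1 - l) z"
    by (simp add: mat_comb_def)
  moreover have "mat_scale (1 / c) (vertigo t A) = mat_comb (1 - l) z (1 - (1 - l)) y"
    using mix by (simp add: mat_comb_def fun_eq_iff add.commute)
  ultimately have "y = mat_scale (1 / c) (vertigo t A)" and "z = mat_scale (1 / c) (vertigo t A)"
    using D_plus_mixture_component_eq[OF A t c trV y z l]
      D_plus_mixture_component_eq[OF A t c trV z y, where l = "1 - l"] l by auto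
  then show "y = z" by simp
qed

theorem theorem3:
  fixes n :: nat and A :: fmat
  assumes "A \<in> extr (A_plus n)"
    and "0 < Re (A n n)"
  shows "\<exists>t0>0. \<forall>t\<ge>t0. vertigo_norm t A \<in> extr (D_plus_n n) \<and> vertigo_norm t A \<in> extr D_plus"
proof (intro exI[of _ "vertigo_threshold n A"] conjI allI impI)
  show "0 < vertigo_threshold n A" by (simp add: vertigo_threshold_def)
  fix t assume t: "vertigo_threshold n A \<le> t"
  then have t0: "0 < t" by (simp add: vertigo_threshold_def)
  have A_plus: "A \<in> A_plus n" using assms(1) by (simp add: extr_def)
  then have sA: "supp_le n A" and hA: "hermitian A" by (auto simp: A_plus_iff wigner_cone_def)
  define c where "c = Re (trace_upto n (vertigo t A))"
  have c0: "0 < c" and psd: "\<And>N v. 0 \<le> Re (\<Sum>i\<le>N. \<Sum>j\<le>N. cnj (v i) * vertigo t A i j * v j)"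
    using vertigo_psd_large_t[OF sA hA assms(2) t] by (simp_all add: c_def)
  have trV: "trace_upto n (vertigo t A) = of_real c"
    unfolding c_def by (rule hermitian_trace_upto_real[OF hermitian_vertigo[OF sA hA]])
  have \<rho>: "vertigo_norm t A = mat_scale (1 / c) (vertigo t A)"
    by (rule vertigo_norm_eq_mat_scale[OF sA trV])
  have D_plus: "vertigo_norm t A \<in> D_plus"
    unfolding \<rho> by (rule mat_scale_vertigo_in_D_plus[OF A_plus t0 c0 trV psd])
  then show extr: "vertigo_norm t A \<in> extr D_plus"
    unfolding \<rho> by (rule mat_scale_vertigo_extr_D_plus[OF assms(1) t0 c0 trV])
  have "supp_le n (vertigo_norm t A)"
    unfolding \<rho> by (intro supp_le_mat_scale supp_le_vertigo sA)
  with D_plus show "vertigo_norm t A \<in> extr (D_plus_n n)"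
    by (intro extr_subset[OF extr]) (auto simp: D_plus_n_def)
qed

end
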